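(* Consider the uplink of a cell-free massive MIMO system with $M$ access points (APs), each with $L$ antennas, and $K$ user equipments (UEs), each with $N$ antennas. For $m=1,\dots,M$ and $l=1,\dots,K$, let $\mathbf{H}_{ml}\in\mathbb{C}^{L\times N}$ be the random channel between AP $m$ and UE $l$, and for each $k$ let $\mathbf{V}_{mk}\in\mathbb{C}^{L\times N}$ be a random combining matrix used by AP $m$ for UE $k$ (all entries having finite second moments, so all expectations below exist). Let $\mathbf{F}_{l,\mathrm{u}}\in\mathbb{C}^{N\times N}$ be deterministic precoding matrices and $\bar{\mathbf{F}}_{l,\mathrm{u}}=\mathbf{F}_{l,\mathrm{u}}\mathbf{F}_{l,\mathrm{u}}^{H}$. Define $$\mathbf{G}_{kl}=\begin{bmatrix}\mathbf{V}_{1k}^{H}\mathbf{H}_{1l}\\ \vdots\\ \mathbf{V}_{Mk}^{H}\mathbf{H}_{Ml}\end{bmatrix}\in\mathbb{C}^{MN\times N},\qquad \mathbf{S}_k=\mathrm{diag}\big(\mathbb{E}\{\mathbf{V}_{1k}^{H}\mathbf{V}_{1k}\},\dots,\mathbb{E}\{\mathbf{V}_{Mk}^{H}\mathbf{V}_{Mk}\}\big)\in\mathbb{C}^{MN\times MN}$$ (block diagonal), let $\sigma^2>0$, and let $\tau_p<\tau_c$ be positive integers. For a LSFD coefficient matrix $\mathbf{A}_k\in\mathbb{C}^{MN\times N}$ set $$\mathbf{D}_k=\mathbf{A}_k^{H}\mathbb{E}\{\mathbf{G}_{kk}\}\mathbf{F}_{k,\mathrm{u}},\qquad \boldsymbol{\Sigma}_k=\sum_{l=1}^{K}\mathbf{A}_k^{H}\mathbb{E}\{\mathbf{G}_{kl}\bar{\mathbf{F}}_{l,\mathrm{u}}\mathbf{G}_{kl}^{H}\}\mathbf{A}_k-\mathbf{D}_k\mathbf{D}_k^{H}+\sigma^2\mathbf{A}_k^{H}\mathbf{S}_k\mathbf{A}_k,$$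 and $$\mathrm{SE}_k(\mathbf{A}_k)=\Big(1-\frac{\tau_p}{\tau_c}\Big)\log_2\big|\mathbf{I}_N+\mathbf{D}_k^{H}\boldsymbol{\Sigma}_k^{-1}\mathbf{D}_k\big|.$$ Then $\mathrm{SE}_k(\mathbf{A}_k)$ is maximized over $\mathbf{A}_k$ by $$\mathbf{A}_k^{\mathrm{opt}}=\Big(\sum_{l=1}^{K}\mathbb{E}\{\mathbf{G}_{kl}\bar{\mathbf{F}}_{l,\mathrm{u}}\mathbf{G}_{kl}^{H}\}+\sigma^2\mathbf{S}_k\Big)^{-1}\mathbb{E}\{\mathbf{G}_{kk}\}\mathbf{F}_{k,\mathrm{u}},$$ and the maximum value equals $$\mathrm{SE}_k^{\mathrm{opt}}=\Big(1-\frac{\tau_p}{\tau_c}\Big)\log_2\Big|\mathbf{I}_N+\mathbf{F}_{k,\mathrm{u}}^{H}\mathbb{E}\{\mathbf{G}_{kk}\}^{H}\Big(\sum_{l=1}^{K}\mathbb{E}\{\mathbf{G}_{kl}\bar{\mathbf{F}}_{l,\mathrm{u}}\mathbf{G}_{kl}^{H}\}-\mathbb{E}\{\mathbf{G}_{kk}\}\bar{\mathbf{F}}_{k,\mathrm{u}}\mathbb{E}\{\mathbf{G}_{kk}\}^{H}+\sigma^2\mathbf{S}_k\Big)^{-1}\mathbb{E}\{\mathbf{G}_{kk}\}\mathbf{F}_{k,\mathrm{u}}\Big|.$$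
   Context: $|\cdot|$ denotes the determinant, $(\cdot)^H$ the conjugate transpose, and $\mathbb{E}\{\cdot\}$ expectation over the random channels and combining matrices. $\mathbf{A}_k$ ranges over matrices for which $\boldsymbol{\Sigma}_k$ is invertible; the matrices $\sum_{l}\mathbb{E}\{\mathbf{G}_{kl}\bar{\mathbf{F}}_{l,\mathrm{u}}\mathbf{G}_{kl}^{H}\}+\sigma^2\mathbf{S}_k$ and $\sum_{l}\mathbb{E}\{\mathbf{G}_{kl}\bar{\mathbf{F}}_{l,\mathrm{u}}\mathbf{G}_{kl}^{H}\}-\mathbb{E}\{\mathbf{G}_{kk}\}\bar{\mathbf{F}}_{k,\mathrm{u}}\mathbb{E}\{\mathbf{G}_{kk}\}^{H}+\sigma^2\mathbf{S}_k$ are (as implicit in the formulas) assumed invertible. *)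

theory Defs
  imports "HOL-Probability.Probability" "Jordan_Normal_Form.Schur_Decomposition"
    "Jordan_Normal_Form.Gauss_Jordan_Elimination"
begin

text \<open>Conventions: APs are indexed by m < M, UEs by l, k < K (0-based).
  Random matrices are functions from the sample space of a probability space P
  into complex matrices; expectation of a random matrix is entrywise.\<close>

definition mexp :: "'w measure \<Rightarrow> nat \<Rightarrow> nat \<Rightarrow> ('w \<Rightarrow> complex mat) \<Rightarrow> complex mat" where
  "mexp P nr nc X = mat nr nc (\<lambda>(i,j). LINT \<omega>|P. X \<omega> $$ (i,j))"

definition msum :: "nat \<Rightarrow> nat \<Rightarrow> ('i \<Rightarrow> complex mat) \<Rightarrow> 'i set \<Rightarrow> complex mat" where
  "msum nr nc f I = mat nr nc (\<lambda>ij. \<Sum>l\<in>I. f l $$ ij)"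

definition minv :: "complex mat \<Rightarrow> complex mat" where
  "minv A = the (mat_inverse A)"

definition Fbar :: "(nat \<Rightarrow> complex mat) \<Rightarrow> nat \<Rightarrow> complex mat" where
  "Fbar F l = F l * mat_adjoint (F l)"

text \<open>G_kl = [V_1k^H H_1l; ...; V_Mk^H H_Ml], an (M N) x N matrix.\<close>
definition Gmat :: "nat \<Rightarrow> nat \<Rightarrow> (nat \<Rightarrow> nat \<Rightarrow> 'w \<Rightarrow> complex mat) \<Rightarrow> (nat \<Rightarrow> nat \<Rightarrow> 'w \<Rightarrow> complex mat)
    \<Rightarrow> nat \<Rightarrow> nat \<Rightarrow> 'w \<Rightarrow> complex mat" where
  "Gmat M N V H k l \<omega> = mat (M*N) N
     (\<lambda>(i,j). (mat_adjoint (V (i div N) k \<omega>) * H (i div N) l \<omega>) $$ (i mod N, j))"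

text \<open>S_k = blockdiag(E{V_1k^H V_1k}, ..., E{V_Mk^H V_Mk}).\<close>
definition Smat :: "'w measure \<Rightarrow> nat \<Rightarrow> nat \<Rightarrow> (nat \<Rightarrow> nat \<Rightarrow> 'w \<Rightarrow> complex mat) \<Rightarrow> nat \<Rightarrow> complex mat" where
  "Smat P M N V k = mat (M*N) (M*N)
     (\<lambda>(i,j). if i div N = j div N
              then mexp P N N (\<lambda>\<omega>. mat_adjoint (V (i div N) k \<omega>) * V (i div N) k \<omega>) $$ (i mod N, j mod N)
              else 0)"

definition EGFG :: "'w measure \<Rightarrow> nat \<Rightarrow> nat \<Rightarrow> (nat \<Rightarrow> nat \<Rightarrow> 'w \<Rightarrow> complex mat)
    \<Rightarrow> (nat \<Rightarrow> nat \<Rightarrow> 'w \<Rightarrow> complex mat) \<Rightarrow> (nat \<Rightarrow> complex mat) \<Rightarrow> nat \<Rightarrow> nat \<Rightarrow> complex mat" where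
  "EGFG P M N V H F k l = mexp P (M*N) (M*N)
     (\<lambda>\<omega>. Gmat M N V H k l \<omega> * Fbar F l * mat_adjoint (Gmat M N V H k l \<omega>))"

definition EG :: "'w measure \<Rightarrow> nat \<Rightarrow> nat \<Rightarrow> (nat \<Rightarrow> nat \<Rightarrow> 'w \<Rightarrow> complex mat)
    \<Rightarrow> (nat \<Rightarrow> nat \<Rightarrow> 'w \<Rightarrow> complex mat) \<Rightarrow> nat \<Rightarrow> complex mat" where
  "EG P M N V H k = mexp P (M*N) N (Gmat M N V H k k)"

definition Dmat :: "'w measure \<Rightarrow> nat \<Rightarrow> nat \<Rightarrow> (nat \<Rightarrow> nat \<Rightarrow> 'w \<Rightarrow> complex mat)
    \<Rightarrow> (nat \<Rightarrow> nat \<Rightarrow> 'w \<Rightarrow> complex mat) \<Rightarrow> (nat \<Rightarrow> complex mat) \<Rightarrow> nat \<Rightarrow> complex mat \<Rightarrow> complex mat" where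
  "Dmat P M N V H F k A = mat_adjoint A * EG P M N V H k * F k"

definition Sigma :: "'w measure \<Rightarrow> nat \<Rightarrow> nat \<Rightarrow> nat \<Rightarrow> (nat \<Rightarrow> nat \<Rightarrow> 'w \<Rightarrow> complex mat)
    \<Rightarrow> (nat \<Rightarrow> nat \<Rightarrow> 'w \<Rightarrow> complex mat) \<Rightarrow> (nat \<Rightarrow> complex mat) \<Rightarrow> real \<Rightarrow> nat \<Rightarrow> complex mat \<Rightarrow> complex mat" where
  "Sigma P M N K V H F \<sigma>2 k A =
     msum N N (\<lambda>l. mat_adjoint A * EGFG P M N V H F k l * A) {0..<K}
     - Dmat P M N V H F k A * mat_adjoint (Dmat P M N V H F k A)
     + complex_of_real \<sigma>2 \<cdot>\<^sub>m (mat_adjoint A * Smat P M N V k * A)"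

text \<open>SE_k(A) = (1 - tau_p/tau_c) log2 det(I_N + D^H Sigma^{-1} D).  The determinant
  is real (and >= 1) whenever Sigma is invertible; we take its real part.\<close>
definition SE :: "'w measure \<Rightarrow> nat \<Rightarrow> nat \<Rightarrow> nat \<Rightarrow> (nat \<Rightarrow> nat \<Rightarrow> 'w \<Rightarrow> complex mat)
    \<Rightarrow> (nat \<Rightarrow> nat \<Rightarrow> 'w \<Rightarrow> complex mat) \<Rightarrow> (nat \<Rightarrow> complex mat) \<Rightarrow> real \<Rightarrow> nat \<Rightarrow> nat
    \<Rightarrow> nat \<Rightarrow> complex mat \<Rightarrow> real" where
  "SE P M N K V H F \<sigma>2 \<tau>p \<tau>c k A =
     (1 - real \<tau>p / real \<tau>c) *
     log 2 (Re (det (1\<^sub>m N + mat_adjoint (Dmat P M N V H F k A)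
                     * minv (Sigma P M N K V H F \<sigma>2 k A) * Dmat P M N V H F k A)))"

end

theory Submission
  imports Defs
begin

text \<open>
  Write b = E{G_kk} F_k and C for the interference-plus-noise matrix \<open>ipn_cov\<close>, so that
  D_k = A^H b and \<Sigma>_k = A^H C A.  The matrix C is positive semidefinite:
  E{G_kk Fbar_k G_kk^H} - b b^H is the covariance of G_kk F_k, and the remaining terms are
  expectations of Gram matrices.  For P = A (A^H C A)^-1 A^H the matrix R = C^-1 - P satisfies
  R C R = R, hence is positive semidefinite, so D^H \<Sigma>^-1 D = b^H P b lies below b^H C^-1 b in
  the Loewner order, and det (I + X) is monotone in that order.  For A = (C + b b^H)^-1 b and
  K = A^H b one finds \<Sigma> = K - K^2 and K (I + b^H C^-1 b) = b^H C^-1 b, so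
  D^H \<Sigma>^-1 D = b^H C^-1 b: the bound is attained.
\<close>

section \<open>Adjoints and positive semidefinite matrices\<close>

lemma mat_adjoint_altdef:
  "mat_adjoint (A :: complex mat) = mat (dim_col A) (dim_row A) (\<lambda>(i,j). cnj (A $$ (j,i)))"
  unfolding mat_adjoint_def by (rule eq_matI) (auto simp: mat_of_rows_def)

lemma dim_row_mat_adjoint [simp]: "dim_row (mat_adjoint (A :: complex mat)) = dim_col A"
  and dim_col_mat_adjoint [simp]: "dim_col (mat_adjoint (A :: complex mat)) = dim_row A"
  by (simp_all add: mat_adjoint_altdef)

lemma index_mat_adjoint [simp]:
  "i < dim_col A \<Longrightarrow> j < dim_row A \<Longrightarrow> mat_adjoint (A :: complex mat) $$ (i,j) = cnj (A $$ (j,i))"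
  by (simp add: mat_adjoint_altdef)

lemma mat_adjoint_carrier_mat:
  "(A :: complex mat) \<in> carrier_mat m n \<Longrightarrow> mat_adjoint A \<in> carrier_mat n m"
  unfolding carrier_mat_def by auto

lemma mat_adjoint_adjoint [simp]: "mat_adjoint (mat_adjoint (A :: complex mat)) = A"
  by (rule eq_matI) auto

lemma mat_adjoint_mult:
  fixes A B :: "complex mat"
  assumes "A \<in> carrier_mat n m" "B \<in> carrier_mat m p"
  shows "mat_adjoint (A * B) = mat_adjoint B * mat_adjoint A"
proof (rule eq_matI)
  fix i j assume "i < dim_row (mat_adjoint B * mat_adjoint A)" "j < dim_col (mat_adjoint B * mat_adjoint A)"
  then show "mat_adjoint (A * B) $$ (i, j) = (mat_adjoint B * mat_adjoint A) $$ (i, j)"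
    using assms by (simp add: scalar_prod_def sum_conjugate mult.commute)
qed (use assms in auto)

lemma mat_adjoint_add:
  fixes A B :: "complex mat"
  assumes "A \<in> carrier_mat n m" "B \<in> carrier_mat n m"
  shows "mat_adjoint (A + B) = mat_adjoint A + mat_adjoint B"
  using assms by (intro eq_matI) auto

lemma mat_adjoint_minus:
  fixes A B :: "complex mat"
  assumes "A \<in> carrier_mat n m" "B \<in> carrier_mat n m"
  shows "mat_adjoint (A - B) = mat_adjoint A - mat_adjoint B"
  using assms by (intro eq_matI) auto

declare minus_carrier_mat [simp]

lemma assoc_mult_mat_dims:
  fixes A B C :: "'a :: semiring_0 mat"
  shows "dim_col A = dim_row B \<Longrightarrow> dim_col B = dim_row C \<Longrightarrow> A * B * C = A * (B * C)"
  by (rule assoc_mult_mat[of A "dim_row A" "dim_col A" B "dim_col B" C "dim_col C"]) auto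

lemma mult_outer_mult_adjoint:
  fixes G F :: "complex mat"
  assumes G: "G \<in> carrier_mat m N" and F: "F \<in> carrier_mat N N"
  shows "G * (F * mat_adjoint F) * mat_adjoint G = (G * F) * mat_adjoint (G * F)"
  using G F mat_adjoint_carrier_mat[OF G] mat_adjoint_carrier_mat[OF F]
  by (simp add: mat_adjoint_mult[OF G F] assoc_mult_mat_dims carrier_matD)

lemma congruence_minus_add_smult:
  fixes Lm Rm P1 P2 P3 :: "complex mat"
  assumes Lm: "Lm \<in> carrier_mat N n" and Rm: "Rm \<in> carrier_mat n N"
    and P1: "P1 \<in> carrier_mat n n" and P2: "P2 \<in> carrier_mat n n" and P3: "P3 \<in> carrier_mat n n"
  shows "Lm * (P1 - P2 + c \<cdot>\<^sub>m P3) * Rm = Lm * P1 * Rm - Lm * P2 * Rm + c \<cdot>\<^sub>m (Lm * P3 * Rm)"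
proof -
  have P1R: "P1 * Rm \<in> carrier_mat n N" and P2R: "P2 * Rm \<in> carrier_mat n N"
    and P3R: "P3 * Rm \<in> carrier_mat n N"
    using P1 P2 P3 Rm by auto
  have "(P1 - P2 + c \<cdot>\<^sub>m P3) * Rm = P1 * Rm - P2 * Rm + c \<cdot>\<^sub>m (P3 * Rm)"
    using P1 P2 P3 Rm
    by (simp add: add_mult_distrib_mat[of _ n n] minus_mult_distrib_mat[of _ n n] mult_smult_assoc_mat)
  moreover have "Lm * (P1 * Rm - P2 * Rm + c \<cdot>\<^sub>m (P3 * Rm))
      = Lm * (P1 * Rm) - Lm * (P2 * Rm) + c \<cdot>\<^sub>m (Lm * (P3 * Rm))"
    using mult_add_distrib_mat[OF Lm minus_carrier_mat[OF P2R] smult_carrier_mat[OF P3R]]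
      mult_minus_distrib_mat[OF Lm P1R P2R] mult_smult_distrib[OF Lm P3R]
    by simp
  ultimately show ?thesis
    using Lm Rm P1 P2 P3 by (simp add: assoc_mult_mat[of _ N n _ n _ N])
qed

definition quad_form :: "complex mat \<Rightarrow> complex vec \<Rightarrow> complex" where
  "quad_form A v = conjugate v \<bullet> (A *\<^sub>v v)"

text \<open>In the ordering of \<open>Complex_Order\<close>, \<open>0 \<le> z\<close> means that z is real and nonnegative;
  this is why positive semidefinite matrices are automatically Hermitian (\<open>psd_imp_hermitian\<close>).\<close>

definition psd :: "complex mat \<Rightarrow> bool" where
  "psd A \<longleftrightarrow> (\<forall>v \<in> carrier_vec (dim_row A). 0 \<le> quad_form A v)"

definition hermitian :: "complex mat \<Rightarrow> bool" where
  "hermitian A \<longleftrightarrow> mat_adjoint A = A"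

lemma psdD: "psd A \<Longrightarrow> A \<in> carrier_mat n n \<Longrightarrow> v \<in> carrier_vec n \<Longrightarrow> 0 \<le> quad_form A v"
  by (simp add: psd_def)

lemma psdI: "A \<in> carrier_mat n n \<Longrightarrow> (\<And>v. v \<in> carrier_vec n \<Longrightarrow> 0 \<le> quad_form A v) \<Longrightarrow> psd A"
  by (simp add: psd_def)

lemma quad_form_expand:
  assumes "A \<in> carrier_mat n n" "v \<in> carrier_vec n"
  shows "quad_form A v = (\<Sum>i<n. \<Sum>j<n. cnj (v $ i) * A $$ (i,j) * v $ j)"
  using assms unfolding quad_form_def
  by (simp add: scalar_prod_def lessThan_atLeast0 sum_distrib_left mult.assoc)

lemma sprod_mult_mat_vec_adjoint:
  fixes A :: "complex mat"
  assumes A: "A \<in> carrier_mat n m" and v: "v \<in> carrier_vec n" and w: "w \<in> carrier_vec m"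
  shows "conjugate v \<bullet> (A *\<^sub>v w) = conjugate (mat_adjoint A *\<^sub>v v) \<bullet> w"
proof -
  have "conjugate v \<bullet> (A *\<^sub>v w) = (\<Sum>i<n. \<Sum>j<m. cnj (v $ i) * A $$ (i,j) * w $ j)"
    using A v w by (simp add: scalar_prod_def lessThan_atLeast0 sum_distrib_left mult.assoc)
  also have "\<dots> = (\<Sum>j<m. \<Sum>i<n. cnj (v $ i) * A $$ (i,j) * w $ j)"
    by (rule sum.swap)
  also have "\<dots> = (\<Sum>j<m. cnj (\<Sum>i<n. cnj (A $$ (i,j)) * v $ i) * w $ j)"
    by (simp add: sum_distrib_right sum_distrib_left mult.commute mult.left_commute)
  also have "\<dots> = conjugate (mat_adjoint A *\<^sub>v v) \<bullet> w"
    using A v w by (simp add: scalar_prod_def lessThan_atLeast0)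
  finally show ?thesis .
qed

lemma quad_form_congruence:
  fixes C T :: "complex mat"
  assumes C: "C \<in> carrier_mat n n" and T: "T \<in> carrier_mat n m" and u: "u \<in> carrier_vec m"
  shows "quad_form (mat_adjoint T * C * T) u = quad_form C (T *\<^sub>v u)"
proof -
  have TH: "mat_adjoint T \<in> carrier_mat m n" using T by (rule mat_adjoint_carrier_mat)
  have "(mat_adjoint T * C * T) *\<^sub>v u = (mat_adjoint T * C) *\<^sub>v (T *\<^sub>v u)"
    by (rule assoc_mult_mat_vec[OF mult_carrier_mat[OF TH C] T u])
  also have "\<dots> = mat_adjoint T *\<^sub>v (C *\<^sub>v (T *\<^sub>v u))"
    using T u by (intro assoc_mult_mat_vec[OF TH C]) simp
  finally show ?thesis
    unfolding quad_form_def using sprod_mult_mat_vec_adjoint[OF TH u, of "C *\<^sub>v (T *\<^sub>v u)"] C T u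
    by simp
qed

lemma quad_form_gram:
  fixes T :: "complex mat"
  assumes T: "T \<in> carrier_mat n m" and u: "u \<in> carrier_vec m"
  shows "quad_form (mat_adjoint T * T) u = (T *\<^sub>v u) \<bullet>c (T *\<^sub>v u)"
proof -
  have "mat_adjoint T * T = mat_adjoint T * 1\<^sub>m n * T"
    by (simp add: right_mult_one_mat[OF mat_adjoint_carrier_mat[OF T]])
  then show ?thesis
    using quad_form_congruence[OF one_carrier_mat T u] T u
    by (simp add: quad_form_def conjugate_vec_sprod_comm[of _ n])
qed

lemma psd_congruence:
  assumes pC: "psd C" and C: "C \<in> carrier_mat n n" and T: "T \<in> carrier_mat n m"
  shows "psd (mat_adjoint T * C * T)"
proof (rule psdI)
  show "mat_adjoint T * C * T \<in> carrier_mat m m"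
    using mult_carrier_mat[OF mat_adjoint_carrier_mat[OF T] C] T by simp
  fix u :: "complex vec" assume u: "u \<in> carrier_vec m"
  show "0 \<le> quad_form (mat_adjoint T * C * T) u"
    unfolding quad_form_congruence[OF C T u] using T u by (intro psdD[OF pC C]) simp
qed

lemma psd_gram:
  assumes T: "T \<in> carrier_mat n m"
  shows "psd (mat_adjoint T * T)"
proof (rule psdI)
  show "mat_adjoint T * T \<in> carrier_mat m m" using mat_adjoint_carrier_mat[OF T] T by simp
  fix u :: "complex vec" assume u: "u \<in> carrier_vec m"
  show "0 \<le> quad_form (mat_adjoint T * T) u"
    unfolding quad_form_gram[OF T u] by (rule conjugate_square_ge_0_vec)
qed

lemma quad_form_add:
  assumes "A \<in> carrier_mat n n" "B \<in> carrier_mat n n" "v \<in> carrier_vec n"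
  shows "quad_form (A + B) v = quad_form A v + quad_form B v"
  unfolding quad_form_def using assms
  by (simp add: add_mult_distrib_mat_vec[of _ n n] scalar_prod_add_distrib[of _ n])

lemma quad_form_minus:
  assumes "A \<in> carrier_mat n n" "B \<in> carrier_mat n n" "v \<in> carrier_vec n"
  shows "quad_form (A - B) v = quad_form A v - quad_form B v"
  unfolding quad_form_def using assms
  by (simp add: minus_mult_distrib_mat_vec[of _ n n] scalar_prod_minus_distrib[of _ n])

lemma quad_form_smult:
  assumes "A \<in> carrier_mat n n" "v \<in> carrier_vec n"
  shows "quad_form (c \<cdot>\<^sub>m A) v = c * quad_form A v"
proof -
  have "(c \<cdot>\<^sub>m A) *\<^sub>v v = c \<cdot>\<^sub>v (A *\<^sub>v v)"
    using assms by (intro eq_vecI) (auto simp: scalar_prod_def sum_distrib_left mult.assoc)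
  then show ?thesis unfolding quad_form_def using assms by (simp add: scalar_prod_smult_distrib[of _ n])
qed

lemma quad_form_unit_plus_unit:
  assumes A: "A \<in> carrier_mat n n" and i: "i < n" and j: "j < n"
  shows "quad_form A (unit_vec n i + c \<cdot>\<^sub>v unit_vec n j)
    = A $$ (i,i) + c * A $$ (i,j) + cnj c * A $$ (j,i) + cnj c * c * A $$ (j,j)"
proof -
  have conj_unit: "conjugate (unit_vec n p :: complex vec) = unit_vec n p" for p
    by (intro eq_vecI) (auto simp: unit_vec_def)
  have entry: "unit_vec n p \<bullet> (A *\<^sub>v unit_vec n q) = A $$ (p,q)" if "p < n" "q < n" for p q
    using A that by simp
  show ?thesis
    using A i j
    by (simp add: quad_form_def conjugate_add_vec[of _ n] conjugate_smult_vec conj_unit entry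
        mult_add_distrib_mat_vec[of _ n n] mult_mat_vec[of _ n n] add_scalar_prod_distrib[of _ n]
        scalar_prod_add_distrib[of _ n] algebra_simps)
qed

lemma psd_imp_hermitian:
  assumes psd: "psd A" and A: "A \<in> carrier_mat n n"
  shows "hermitian A"
proof -
  \<comment> \<open>polarization: the quadratic form is real at e_i + c e_j for c = 0, 1, \<i>\<close>
  have Im_q: "Im (A $$ (i,i) + c * A $$ (i,j) + cnj c * A $$ (j,i) + cnj c * c * A $$ (j,j)) = 0"
    if "i < n" "j < n" for i j c
    using psdD[OF psd A, of "unit_vec n i + c \<cdot>\<^sub>v unit_vec n j"] quad_form_unit_plus_unit[OF A that]
    by (simp add: less_eq_complex_def)
  have entry: "A $$ (j,i) = cnj (A $$ (i,j))" if i: "i < n" and j: "j < n" for i j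
  proof -
    have "Im (A $$ (i,i)) = 0" "Im (A $$ (j,j)) = 0"
      using Im_q[OF i i, of 0] Im_q[OF j j, of 0] by simp_all
    moreover have "Im (A $$ (i,i)) + Im (A $$ (i,j)) + Im (A $$ (j,i)) + Im (A $$ (j,j)) = 0"
      using Im_q[OF i j, of 1] by simp
    moreover have "Im (A $$ (i,i)) + Re (A $$ (i,j)) - Re (A $$ (j,i)) + Im (A $$ (j,j)) = 0"
      using Im_q[OF i j, of \<i>] by simp
    ultimately show ?thesis by (simp add: complex_eq_iff)
  qed
  show ?thesis unfolding hermitian_def
  proof (rule eq_matI)
    fix i j assume "i < dim_row A" "j < dim_col A"
    then show "mat_adjoint A $$ (i,j) = A $$ (i,j)" using A entry[of j i] by simp
  qed (use A in auto)
qed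

section \<open>Finite sums and block-diagonal matrices\<close>

lemma msum_carrier_mat [simp]: "msum nr nc f I \<in> carrier_mat nr nc"
  by (simp add: msum_def)

lemma quad_form_msum:
  assumes I: "finite I" and f: "\<And>l. l \<in> I \<Longrightarrow> f l \<in> carrier_mat n n" and v: "v \<in> carrier_vec n"
  shows "quad_form (msum n n f I) v = (\<Sum>l\<in>I. quad_form (f l) v)"
proof -
  have "quad_form (msum n n f I) v = (\<Sum>i<n. \<Sum>j<n. \<Sum>l\<in>I. cnj (v $ i) * f l $$ (i,j) * v $ j)"
    unfolding quad_form_expand[OF msum_carrier_mat v]
    by (simp add: msum_def sum_distrib_left sum_distrib_right)
  also have "\<dots> = (\<Sum>l\<in>I. quad_form (f l) v)"
    by (simp add: quad_form_expand[OF f v] sum.swap[of _ I])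
  finally show ?thesis .
qed

lemma msum_congruence:
  fixes f :: "'i \<Rightarrow> complex mat"
  assumes I: "finite I" and f: "\<And>l. l \<in> I \<Longrightarrow> f l \<in> carrier_mat n n"
    and Lm: "Lm \<in> carrier_mat N n" and Rm: "Rm \<in> carrier_mat n N"
  shows "msum N N (\<lambda>l. Lm * f l * Rm) I = Lm * msum n n f I * Rm"
  using I f
proof (induct I rule: finite_induct)
  case empty
  then show ?case using Lm Rm by (intro eq_matI) (auto simp: msum_def scalar_prod_def)
next
  case (insert x I)
  have fx: "f x \<in> carrier_mat n n" using insert by simp
  have split: "msum nr nc g (insert x I) = g x + msum nr nc g I"
    if "g x \<in> carrier_mat nr nc" for nr nc and g :: "'i \<Rightarrow> complex mat"
    using insert(1,2) that by (intro eq_matI) (auto simp: msum_def)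
  have "msum N N (\<lambda>l. Lm * f l * Rm) (insert x I) = Lm * f x * Rm + Lm * msum n n f I * Rm"
    using split[of "\<lambda>l. Lm * f l * Rm", OF mult_carrier_mat[OF mult_carrier_mat[OF Lm fx] Rm]] insert
    by simp
  also have "\<dots> = Lm * (f x + msum n n f I) * Rm"
    using fx Lm Rm by (simp add: mult_add_distrib_mat[of _ N n] add_mult_distrib_mat[of _ N n])
  also have "f x + msum n n f I = msum n n f (insert x I)" using split[of f] fx by simp
  finally show ?case .
qed

lemma sum_blocks: "(\<Sum>i<M*N. g i) = (\<Sum>m<M. \<Sum>r<N. g (m*N + r :: nat))"
proof -
  have "(\<Sum>i<M*N. g i) = (\<Sum>m<M. \<Sum>i\<in>{m*N..<m*N+N}. g i)"
    by (rule sum.nat_group[symmetric])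
  also have "\<dots> = (\<Sum>m<M. \<Sum>r<N. g (m*N + r))"
  proof (rule sum.cong[OF refl])
    fix m
    show "(\<Sum>i\<in>{m*N..<m*N+N}. g i) = (\<Sum>r<N. g (m*N + r))"
      using sum.shift_bounds_nat_ivl[of g 0 "m*N" N] by (simp add: lessThan_atLeast0 add.commute)
  qed
  finally show ?thesis .
qed

definition block_diag :: "nat \<Rightarrow> nat \<Rightarrow> (nat \<Rightarrow> complex mat) \<Rightarrow> complex mat" where
  "block_diag M N Q =
     mat (M*N) (M*N) (\<lambda>(i,j). if i div N = j div N then Q (i div N) $$ (i mod N, j mod N) else 0)"

lemma block_diag_carrier_mat: "block_diag M N Q \<in> carrier_mat (M*N) (M*N)"
  by (simp add: block_diag_def)

lemma index_block_diag:
  assumes "m < M" "r < N" "m' < M" "r' < N"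
  shows "block_diag M N Q $$ (m*N + r, m'*N + r') = (if m = m' then Q m $$ (r,r') else 0)"
proof -
  have "a*N + b < M*N" if "a < M" "b < N" for a b
  proof -
    have "a*N + b < Suc a * N" using that by simp
    also have "\<dots> \<le> M * N" using that by (intro mult_le_mono1) simp
    finally show ?thesis .
  qed
  then show ?thesis using assms by (simp add: block_diag_def)
qed

lemma quad_form_block_diag:
  assumes Q: "\<And>m. m < M \<Longrightarrow> Q m \<in> carrier_mat N N" and v: "v \<in> carrier_vec (M*N)"
  shows "quad_form (block_diag M N Q) v = (\<Sum>m<M. quad_form (Q m) (vec N (\<lambda>r. v $ (m*N + r))))"
proof -
  let ?t = "\<lambda>m r r'. cnj (v $ (m*N + r)) * Q m $$ (r,r') * v $ (m*N + r')"
  have "quad_form (block_diag M N Q) v = (\<Sum>m<M. \<Sum>r<N. \<Sum>m'<M. \<Sum>r'<N.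
      cnj (v $ (m*N + r)) * block_diag M N Q $$ (m*N + r, m'*N + r') * v $ (m'*N + r'))"
    unfolding quad_form_expand[OF block_diag_carrier_mat v] sum_blocks[of _ M N] ..
  also have "\<dots> = (\<Sum>m<M. \<Sum>r<N. \<Sum>m'<M. if m = m' then (\<Sum>r'<N. ?t m r r') else 0)"
    by (intro sum.cong refl) (simp add: index_block_diag)
  also have "\<dots> = (\<Sum>m<M. \<Sum>r<N. \<Sum>r'<N. ?t m r r')"
    by (simp add: sum.delta)
  also have "\<dots> = (\<Sum>m<M. quad_form (Q m) (vec N (\<lambda>r. v $ (m*N + r))))"
    by (intro sum.cong refl) (simp add: quad_form_expand[OF Q])
  finally show ?thesis .
qed

lemma psd_block_diag:
  assumes Q: "\<And>m. m < M \<Longrightarrow> Q m \<in> carrier_mat N N" and pQ: "\<And>m. m < M \<Longrightarrow> psd (Q m)"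
  shows "psd (block_diag M N Q)"
proof (rule psdI[OF block_diag_carrier_mat])
  fix v :: "complex vec" assume v: "v \<in> carrier_vec (M*N)"
  have nonneg: "0 \<le> quad_form (Q m) (vec N (\<lambda>r. v $ (m*N + r)))" if "m < M" for m
    using psdD[OF pQ[OF that] Q[OF that]] by simp
  have "0 \<le> (\<Sum>m<M. quad_form (Q m) (vec N (\<lambda>r. v $ (m*N + r))))"
    by (rule sum_nonneg) (simp add: nonneg)
  then show "0 \<le> quad_form (block_diag M N Q) v" using quad_form_block_diag[OF Q v] by simp
qed

section \<open>Inverses and determinants\<close>

lemma minv_inverse:
  fixes A :: "complex mat"
  assumes A: "A \<in> carrier_mat n n" and inv: "invertible_mat A"
  shows "minv A \<in> carrier_mat n n" "A * minv A = 1\<^sub>m n" "minv A * A = 1\<^sub>m n"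
proof -
  from inv obtain B where AB: "A * B = 1\<^sub>m (dim_row A)" and BA: "B * A = 1\<^sub>m (dim_row B)"
    unfolding invertible_mat_def inverts_mat_def by blast
  have B: "B \<in> carrier_mat n n"
    using arg_cong[OF AB, of dim_col] arg_cong[OF BA, of dim_col] A by auto
  have "A \<in> Units (ring_mat TYPE(complex) n ())"
    using A B AB BA unfolding Units_def ring_mat_def by auto
  then obtain C where C: "mat_inverse A = Some C"
    using mat_inverse(1)[OF A, of "()"] by (cases "mat_inverse A") auto
  from mat_inverse(2)[OF A C]
  show "minv A \<in> carrier_mat n n" "A * minv A = 1\<^sub>m n" "minv A * A = 1\<^sub>m n"
    unfolding minv_def C by auto
qed

lemma invertible_mat_right_inverse:
  fixes A B :: "complex mat"
  assumes A: "A \<in> carrier_mat n n" and B: "B \<in> carrier_mat n n" and AB: "A * B = 1\<^sub>m n"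
  shows "invertible_mat A"
  using A B AB mat_mult_left_right_inverse[OF A B AB]
  unfolding invertible_mat_def inverts_mat_def by (auto intro!: exI[of _ B])

lemma minv_eqI:
  fixes A B :: "complex mat"
  assumes A: "A \<in> carrier_mat n n" and B: "B \<in> carrier_mat n n" and AB: "A * B = 1\<^sub>m n"
  shows "minv A = B"
proof -
  note inv = minv_inverse[OF A invertible_mat_right_inverse[OF A B AB]]
  have "minv A = (B * A) * minv A"
    using mat_mult_left_right_inverse[OF A B AB] inv(1) by simp
  also have "\<dots> = B * (A * minv A)" by (rule assoc_mult_mat[OF B A inv(1)])
  also have "\<dots> = B" using inv(2) B by simp
  finally show ?thesis .
qed

lemma invertible_mat_det:
  fixes A :: "complex mat"
  assumes A: "A \<in> carrier_mat n n" and "det A \<noteq> 0"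
  shows "invertible_mat A"
proof -
  from det_non_zero_imp_unit[OF assms, of "()"] obtain B
    where "B \<in> carrier_mat n n" "A * B = 1\<^sub>m n"
    unfolding Units_def ring_mat_def by auto
  then show ?thesis using invertible_mat_right_inverse[OF A] by blast
qed

lemma hermitian_minv:
  fixes A :: "complex mat"
  assumes A: "A \<in> carrier_mat n n" and inv: "invertible_mat A" and h: "hermitian A"
  shows "hermitian (minv A)"
proof -
  note Ai = minv_inverse[OF A inv]
  have AiH: "mat_adjoint (minv A) \<in> carrier_mat n n" using Ai(1) by (rule mat_adjoint_carrier_mat)
  have "mat_adjoint (minv A) * A = mat_adjoint (A * minv A)"
    using mat_adjoint_mult[OF A Ai(1)] h unfolding hermitian_def by simp
  also have "\<dots> = 1\<^sub>m n" unfolding Ai(2) by (rule eq_matI) auto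
  finally have "A * mat_adjoint (minv A) = 1\<^sub>m n" by (rule mat_mult_left_right_inverse[OF AiH A])
  then show ?thesis unfolding hermitian_def by (rule minv_eqI[OF A AiH, symmetric])
qed

lemma psd_minv:
  assumes psd: "psd S" and S: "S \<in> carrier_mat n n" and inv: "invertible_mat S"
  shows "psd (minv S)"
proof -
  note Si = minv_inverse[OF S inv]
  have "hermitian (minv S)" using hermitian_minv[OF S inv psd_imp_hermitian[OF psd S]] .
  then have "mat_adjoint (minv S) * S * minv S = minv S * (S * minv S)"
    using S Si(1) unfolding hermitian_def by (simp add: assoc_mult_mat[of _ n n _ n _ n])
  also have "\<dots> = minv S" using Si by simp
  finally show ?thesis using psd_congruence[OF psd S Si(1)] by simp
qed

lemma minv_mult_diff_mult_minv:
  fixes B C :: "complex mat"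
  assumes B: "B \<in> carrier_mat n n" and iB: "invertible_mat B"
    and C: "C \<in> carrier_mat n n" and iC: "invertible_mat C"
  shows "minv B * (B - C) * minv C = minv C - minv B"
proof -
  note Bi = minv_inverse[OF B iB] and Ci = minv_inverse[OF C iC]
  have "minv B * (B - C) = 1\<^sub>m n - minv B * C"
    using Bi B C by (simp add: mult_minus_distrib_mat[of _ n n])
  then have "minv B * (B - C) * minv C = minv C - minv B * C * minv C"
    using Bi(1) C Ci(1) by (simp add: minus_mult_distrib_mat[of _ n n])
  also have "minv B * C * minv C = minv B"
    using Bi(1) C Ci by (simp add: assoc_mult_mat[of _ n n _ n _ n])
  finally show ?thesis .
qed

lemma nonneg_of_eq_mult_pos:
  fixes a p q :: complex
  assumes "0 \<le> p" "0 < q" "p = a * q"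
  shows "0 \<le> a"
proof -
  from assms(2) have q: "Im q = 0" "Re q > 0" by (auto simp: less_complex_def)
  from assms(1) have p: "Im p = 0" "Re p \<ge> 0" by (auto simp: less_eq_complex_def)
  have "Re p = Re a * Re q" "Im p = Im a * Re q" using assms(3) q by auto
  then show ?thesis using p q by (auto simp: less_eq_complex_def zero_le_mult_iff)
qed

lemma prod_list_ge_one: "\<forall>x \<in> set xs. (1::complex) \<le> x \<Longrightarrow> 1 \<le> prod_list xs"
proof (induct xs)
  case (Cons x xs)
  then have "1 * 1 \<le> x * prod_list xs"
    by (intro mult_mono) (auto simp: less_eq_complex_def)
  then show ?case by simp
qed simp

lemma det_one_plus_ge_one:
  fixes X :: "complex mat"
  assumes X: "X \<in> carrier_mat n n" and ev: "\<And>a. eigenvalue X a \<Longrightarrow> 0 \<le> a"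
  shows "1 \<le> det (1\<^sub>m n + X)"
proof -
  have mX: "- X \<in> carrier_mat n n" using X by simp
  obtain as where cp: "char_poly (- X) = (\<Prod>a\<leftarrow>as. [:- a, 1:])"
    using char_poly_factorized[OF mX] by blast
  have "- char_matrix (- X) 1 = 1\<^sub>m n + X"
    using X by (intro eq_matI) (auto simp: char_matrix_def)
  then have "det (1\<^sub>m n + X) = poly (char_poly (- X)) 1"
    using char_poly_matrix[OF mX] by simp
  also have "\<dots> = (\<Prod>a\<leftarrow>as. 1 - a)" unfolding cp poly_prod_list by (simp add: o_def)
  also have "1 \<le> \<dots>"
  proof (intro prod_list_ge_one ballI)
    fix b assume "b \<in> set (map (\<lambda>a. 1 - a) as)"
    then obtain a where a: "a \<in> set as" and b: "b = 1 - a" by auto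
    have "poly (char_poly (- X)) a = 0"
      unfolding cp poly_prod_list using a by (auto simp: prod_list_zero_iff)
    then obtain v where "eigenvector (- X) v a"
      using eigenvalue_root_char_poly[OF mX] unfolding eigenvalue_def by blast
    then have v: "v \<in> carrier_vec n" "v \<noteq> 0\<^sub>v n" "- (X *\<^sub>v v) = a \<cdot>\<^sub>v v"
      using X unfolding eigenvector_def by auto
    have "X *\<^sub>v v = (- a) \<cdot>\<^sub>v v"
    proof (rule eq_vecI)
      fix i assume "i < dim_vec ((- a) \<cdot>\<^sub>v v)"
      then show "(X *\<^sub>v v) $ i = ((- a) \<cdot>\<^sub>v v) $ i"
        using arg_cong[OF v(3), of "\<lambda>w. w $ i"] X v(1) by (simp add: minus_equation_iff)
    qed (use X v(1) in simp)
    then have "eigenvalue X (- a)"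
      using X v unfolding eigenvalue_def eigenvector_def by auto
    then have "0 \<le> - a" by (rule ev)
    then show "1 \<le> b" unfolding b by (auto simp: less_eq_complex_def)
  qed
  finally show ?thesis .
qed

lemma psd_eigenvalue_nonneg:
  assumes "psd X" "X \<in> carrier_mat n n" "eigenvalue X a"
  shows "0 \<le> a"
proof -
  obtain v where v: "v \<in> carrier_vec n" "v \<noteq> 0\<^sub>v n" "X *\<^sub>v v = a \<cdot>\<^sub>v v"
    using assms(2,3) unfolding eigenvalue_def eigenvector_def by auto
  have "0 < v \<bullet>c v" using v by simp
  moreover have "quad_form X v = a * (v \<bullet>c v)"
    using v unfolding quad_form_def by (simp add: conjugate_vec_sprod_comm[of v n v])
  ultimately show ?thesis by (rule nonneg_of_eq_mult_pos[OF psdD[OF assms(1,2) v(1)]])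
qed

lemma det_one_plus_psd_ge_one:
  assumes "psd X" "X \<in> carrier_mat n n"
  shows "1 \<le> det (1\<^sub>m n + X)"
  by (rule det_one_plus_ge_one[OF assms(2) psd_eigenvalue_nonneg[OF assms]])

lemma eigenvalue_nonneg_if_psd_mult:
  assumes Q: "Q \<in> carrier_mat n n" and Z: "Z \<in> carrier_mat n n"
    and posQ: "\<And>v. v \<in> carrier_vec n \<Longrightarrow> v \<noteq> 0\<^sub>v n \<Longrightarrow> 0 < quad_form Q v"
    and pQZ: "psd (Q * Z)" and ev: "eigenvalue Z a"
  shows "0 \<le> a"
proof -
  obtain v where v: "v \<in> carrier_vec n" "v \<noteq> 0\<^sub>v n" "Z *\<^sub>v v = a \<cdot>\<^sub>v v"
    using ev Z unfolding eigenvalue_def eigenvector_def by auto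
  have "(Q * Z) *\<^sub>v v = Q *\<^sub>v (Z *\<^sub>v v)" using Q Z v(1) by (rule assoc_mult_mat_vec)
  also have "\<dots> = a \<cdot>\<^sub>v (Q *\<^sub>v v)" unfolding v(3) using Q v(1) by (rule mult_mat_vec)
  finally have "quad_form (Q * Z) v = a * quad_form Q v"
    unfolding quad_form_def using v Q by simp
  moreover have "0 \<le> quad_form (Q * Z) v" using psdD[OF pQZ _ v(1)] Q Z by simp
  ultimately show ?thesis using posQ[OF v(1,2)] nonneg_of_eq_mult_pos by blast
qed

lemma det_one_plus_mono:
  assumes X: "X \<in> carrier_mat n n" and Y: "Y \<in> carrier_mat n n"
    and pX: "psd X" and pYX: "psd (Y - X)"
  shows "det (1\<^sub>m n + X) \<le> det (1\<^sub>m n + Y)"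
proof -
  define Q where "Q = 1\<^sub>m n + X"
  have Q: "Q \<in> carrier_mat n n" unfolding Q_def using X by simp
  have dQ: "1 \<le> det Q" unfolding Q_def using det_one_plus_psd_ge_one[OF pX X] .
  then have "det Q \<noteq> 0" by (auto simp: less_eq_complex_def)
  note Qi = minv_inverse[OF Q invertible_mat_det[OF Q this]]
  define Z where "Z = minv Q * (Y - X)"
  have Z: "Z \<in> carrier_mat n n" unfolding Z_def using Qi(1) X Y by simp
  have QZ: "Q * Z = Y - X"
    unfolding Z_def using Q Qi X Y by (simp add: assoc_mult_mat[symmetric, of _ n n _ n _ n])
  have posQ: "0 < quad_form Q v" if v: "v \<in> carrier_vec n" "v \<noteq> 0\<^sub>v n" for v
  proof -
    have "quad_form (1\<^sub>m n) v = v \<bullet>c v"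
      using v unfolding quad_form_def by (simp add: conjugate_vec_sprod_comm[of v n v])
    then have "quad_form Q v = v \<bullet>c v + quad_form X v"
      unfolding Q_def using quad_form_add[OF one_carrier_mat X v(1)] by simp
    moreover have "0 < v \<bullet>c v" using v by simp
    ultimately show ?thesis using psdD[OF pX X v(1)] by (simp add: add_pos_nonneg)
  qed
  have dZ: "1 \<le> det (1\<^sub>m n + Z)"
    using eigenvalue_nonneg_if_psd_mult[OF Q Z posQ pYX[folded QZ]] by (rule det_one_plus_ge_one[OF Z])
  have "Q * (1\<^sub>m n + Z) = Q + (Y - X)"
    using mult_add_distrib_mat[OF Q one_carrier_mat Z] Q by (simp add: QZ)
  also have "\<dots> = 1\<^sub>m n + Y" unfolding Q_def using X Y by (intro eq_matI) auto
  finally have "det (1\<^sub>m n + Y) = det (Q * (1\<^sub>m n + Z))" by simp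
  also have "\<dots> = det Q * det (1\<^sub>m n + Z)" using Z by (intro det_mult[OF Q]) simp
  finally have "det (1\<^sub>m n + Y) = det Q * det (1\<^sub>m n + Z)" .
  moreover have "det Q * 1 \<le> det Q * det (1\<^sub>m n + Z)"
    using dQ dZ by (intro mult_left_mono) (auto simp: less_eq_complex_def)
  ultimately show ?thesis unfolding Q_def by simp
qed

section \<open>The determinant gain of a combining matrix\<close>

lemma congruence_projection:
  fixes C A :: "complex mat"
  defines "P \<equiv> A * minv (mat_adjoint A * C * A) * mat_adjoint A"
  assumes C: "C \<in> carrier_mat n n" and hC: "hermitian C"
    and A: "A \<in> carrier_mat n N" and iS: "invertible_mat (mat_adjoint A * C * A)"
  shows "hermitian P" and "P * C * P = P"
proof -
  define S where "S = mat_adjoint A * C * A"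
  have AH: "mat_adjoint A \<in> carrier_mat N n" using A by (rule mat_adjoint_carrier_mat)
  have S: "S \<in> carrier_mat N N" unfolding S_def using AH A C by simp
  note Si = minv_inverse[OF S iS[folded S_def]]
  note asc = assoc_mult_mat_dims carrier_matD[OF A] carrier_matD[OF C] carrier_matD[OF Si(1)]
  have P_S: "P = A * minv S * mat_adjoint A" unfolding P_def S_def ..
  have "mat_adjoint S = S"
    using mat_adjoint_mult[OF mult_carrier_mat[OF AH C] A] mat_adjoint_mult[OF AH C] hC
    unfolding S_def hermitian_def by (simp add: asc)
  then have "hermitian (minv S)" using hermitian_minv[OF S iS[folded S_def]] unfolding hermitian_def by simp
  moreover have "mat_adjoint P = A * (mat_adjoint (minv S) * mat_adjoint A)"
    unfolding P_S using mat_adjoint_mult[OF mult_carrier_mat[OF A Si(1)] AH] mat_adjoint_mult[OF A Si(1)]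
    by simp
  ultimately show "hermitian P"
    using A AH Si(1) unfolding P_S hermitian_def by (simp add: asc)
  have "P * C * P = A * (minv S * (mat_adjoint A * C * A) * minv S) * mat_adjoint A"
    unfolding P_S using A AH C Si(1) by (simp add: asc)
  also have "\<dots> = P" unfolding S_def[symmetric] P_S using Si by simp
  finally show "P * C * P = P" .
qed

lemma psd_minv_minus_projection:
  fixes C A :: "complex mat"
  assumes C: "C \<in> carrier_mat n n" and pC: "psd C" and iC: "invertible_mat C"
    and A: "A \<in> carrier_mat n N" and iS: "invertible_mat (mat_adjoint A * C * A)"
  shows "psd (minv C - A * minv (mat_adjoint A * C * A) * mat_adjoint A)"
proof -
  define P where "P = A * minv (mat_adjoint A * C * A) * mat_adjoint A"
  define R where "R = minv C - P"
  have hC: "hermitian C" by (rule psd_imp_hermitian[OF pC C])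
  note proj = congruence_projection[OF C hC A iS, folded P_def] and Ci = minv_inverse[OF C iC]
  have AH: "mat_adjoint A \<in> carrier_mat N n" using A by (rule mat_adjoint_carrier_mat)
  have S: "mat_adjoint A * C * A \<in> carrier_mat N N"
    using mult_carrier_mat[OF mult_carrier_mat[OF AH C] A] .
  have P: "P \<in> carrier_mat n n"
    unfolding P_def using mult_carrier_mat[OF mult_carrier_mat[OF A minv_inverse(1)[OF S iS]] AH] .
  have R: "R \<in> carrier_mat n n" unfolding R_def using P Ci(1) by simp
  have "R * C = 1\<^sub>m n - P * C"
    unfolding R_def using Ci P C by (simp add: minus_mult_distrib_mat[of _ n n])
  then have "R * C * R = R - P * C * R"
    using P C R by (simp add: minus_mult_distrib_mat[of _ n n])
  also have "P * C * R = P * (C * minv C) - P * C * P"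
    unfolding R_def using P C Ci
    by (simp add: mult_minus_distrib_mat[of _ n n] assoc_mult_mat[of _ n n _ n _ n])
  also have "\<dots> = 0\<^sub>m n n" using proj(2) P Ci by simp
  also have "R - 0\<^sub>m n n = R" using R by (intro eq_matI) auto
  finally have "R * C * R = R" .
  moreover have "hermitian R"
    using hermitian_minv[OF C iC hC] proj(1) Ci(1) P unfolding R_def hermitian_def
    by (simp add: mat_adjoint_minus[of _ n n])
  ultimately have "R = mat_adjoint R * C * R" unfolding hermitian_def by simp
  then show ?thesis using psd_congruence[OF pC C R] unfolding R_def P_def by simp
qed

definition det_gain :: "complex mat \<Rightarrow> complex mat \<Rightarrow> complex mat \<Rightarrow> complex" where
  "det_gain C b A = det (1\<^sub>m (dim_col b) + mat_adjoint (mat_adjoint A * b)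
                           * minv (mat_adjoint A * C * A) * (mat_adjoint A * b))"

lemma det_gain_bounds:
  fixes C b A :: "complex mat"
  assumes C: "C \<in> carrier_mat n n" and pC: "psd C" and iC: "invertible_mat C"
    and b: "b \<in> carrier_mat n N" and A: "A \<in> carrier_mat n N"
    and iS: "invertible_mat (mat_adjoint A * C * A)"
  shows "1 \<le> det_gain C b A" "det_gain C b A \<le> det (1\<^sub>m N + mat_adjoint b * minv C * b)"
proof -
  define S where "S = mat_adjoint A * C * A"
  define P where "P = A * minv S * mat_adjoint A"
  define D where "D = mat_adjoint A * b"
  define X where "X = mat_adjoint D * minv S * D"
  define Y where "Y = mat_adjoint b * minv C * b"
  have AH: "mat_adjoint A \<in> carrier_mat N n" and bH: "mat_adjoint b \<in> carrier_mat N n"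
    using A b by (simp_all add: mat_adjoint_carrier_mat)
  have S: "S \<in> carrier_mat N N" unfolding S_def using AH A C by simp
  note Si = minv_inverse[OF S iS[folded S_def]] and Ci = minv_inverse[OF C iC]
  have P: "P \<in> carrier_mat n n" unfolding P_def using A AH Si(1) by simp
  have D: "D \<in> carrier_mat N N" unfolding D_def using AH b by simp
  have DH: "mat_adjoint D \<in> carrier_mat N N" using D by (rule mat_adjoint_carrier_mat)
  have X: "X \<in> carrier_mat N N" unfolding X_def using DH D Si(1) by simp
  have Y: "Y \<in> carrier_mat N N" unfolding Y_def using bH b Ci(1) by simp
  have pSi: "psd (minv S)"
    unfolding S_def by (rule psd_minv[OF psd_congruence[OF pC C A] S[unfolded S_def] iS])
  have pX: "psd X" unfolding X_def by (rule psd_congruence[OF pSi Si(1) D])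
  have "mat_adjoint D = mat_adjoint b * A"
    unfolding D_def using mat_adjoint_mult[OF AH b] by simp
  then have "X = mat_adjoint b * P * b"
    unfolding X_def D_def P_def using A AH b bH Si(1) by (simp add: assoc_mult_mat_dims carrier_matD)
  then have "Y - X = (mat_adjoint b * minv C - mat_adjoint b * P) * b"
    unfolding Y_def using bH b Ci(1) P by (simp add: minus_mult_distrib_mat[of _ N n])
  also have "\<dots> = mat_adjoint b * (minv C - P) * b"
    using bH Ci(1) P by (simp add: mult_minus_distrib_mat[of _ N n])
  finally have pYX: "psd (Y - X)"
    using psd_congruence[OF psd_minv_minus_projection[OF C pC iC A iS] _ b] Ci(1) P
    unfolding P_def S_def by simp
  have "det_gain C b A = det (1\<^sub>m N + X)" unfolding det_gain_def X_def D_def S_def using b by simp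
  then show "1 \<le> det_gain C b A" "det_gain C b A \<le> det (1\<^sub>m N + mat_adjoint b * minv C * b)"
    using det_one_plus_psd_ge_one[OF pX X] det_one_plus_mono[OF X Y pX pYX] unfolding Y_def
    by simp_all
qed

lemma adjoint_minv_sandwich_eq:
  fixes K Y Sg :: "complex mat"
  assumes K: "K \<in> carrier_mat N N" and Y: "Y \<in> carrier_mat N N" and Sg: "Sg \<in> carrier_mat N N"
    and iSg: "invertible_mat Sg" and hK: "hermitian K"
    and KY: "K * Y = Y - K" and Sg_eq: "Sg = K - K * K"
  shows "mat_adjoint K * minv Sg * K = Y"
proof -
  note Si = minv_inverse[OF Sg iSg]
  have KKY: "K + K * Y = Y" unfolding KY using K Y by (intro eq_matI) auto
  have "(1\<^sub>m N - K) * (1\<^sub>m N + Y) = 1\<^sub>m N * (1\<^sub>m N + Y) - K * (1\<^sub>m N + Y)"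
    using K Y by (intro minus_mult_distrib_mat) auto
  also have "\<dots> = 1\<^sub>m N + Y - (K + K * Y)"
    using mult_add_distrib_mat[OF K one_carrier_mat Y] K Y by simp
  also have "\<dots> = 1\<^sub>m N" unfolding KKY using Y by (intro eq_matI) auto
  moreover have "Sg = K * (1\<^sub>m N - K)"
    unfolding Sg_eq using mult_minus_distrib_mat[OF K one_carrier_mat K] K by simp
  ultimately have SgK: "Sg * (1\<^sub>m N + Y) = K"
    using K Y by (simp add: assoc_mult_mat[of _ N N _ N _ N])
  have "mat_adjoint K * minv Sg * K = K * minv Sg * (Sg * (1\<^sub>m N + Y))"
    unfolding SgK using hK unfolding hermitian_def by simp
  also have "\<dots> = K * ((minv Sg * Sg) * (1\<^sub>m N + Y))"
    using K Y Si(1) Sg by (simp add: assoc_mult_mat[of _ N N _ N _ N])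
  also have "\<dots> = K + K * Y" using Si(3) mult_add_distrib_mat[OF K one_carrier_mat Y] K Y by simp
  finally show ?thesis unfolding KKY .
qed

lemma minv_rank_update_mult:
  fixes C b :: "complex mat"
  defines "B \<equiv> C + b * mat_adjoint b"
  assumes C: "C \<in> carrier_mat n n" and iC: "invertible_mat C"
    and b: "b \<in> carrier_mat n N" and iB: "invertible_mat B"
  shows "(mat_adjoint b * minv B * b) * (mat_adjoint b * minv C * b)
    = mat_adjoint b * minv C * b - mat_adjoint b * minv B * b"
proof -
  have bH: "mat_adjoint b \<in> carrier_mat N n" using b by (rule mat_adjoint_carrier_mat)
  have bbH: "b * mat_adjoint b \<in> carrier_mat n n" using b bH by simp
  have B: "B \<in> carrier_mat n n" unfolding B_def using C bbH by simp
  note Bi = minv_inverse[OF B iB] and Ci = minv_inverse[OF C iC]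
  have bbH_eq: "b * mat_adjoint b = B - C" unfolding B_def using C bbH by (intro eq_matI) auto
  have "(mat_adjoint b * minv B * b) * (mat_adjoint b * minv C * b)
      = mat_adjoint b * (minv B * (b * mat_adjoint b) * minv C) * b"
    using b bH Bi(1) Ci(1)
    by (simp add: assoc_mult_mat_dims carrier_matD[OF b] carrier_matD[OF bH] carrier_matD[OF Bi(1)]
        carrier_matD[OF Ci(1)])
  also have "\<dots> = mat_adjoint b * (minv C - minv B) * b"
    unfolding bbH_eq minv_mult_diff_mult_minv[OF B iB C iC] ..
  also have "\<dots> = mat_adjoint b * minv C * b - mat_adjoint b * minv B * b"
    using bH b Bi(1) Ci(1) by (simp add: mult_minus_distrib_mat[of _ N n] minus_mult_distrib_mat[of _ N n])
  finally show ?thesis .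
qed

lemma minv_rank_update_congruence:
  fixes C b :: "complex mat"
  defines "B \<equiv> C + b * mat_adjoint b"
  assumes C: "C \<in> carrier_mat n n" and hC: "hermitian C"
    and b: "b \<in> carrier_mat n N" and iB: "invertible_mat B"
  shows "mat_adjoint (minv B * b) = mat_adjoint b * minv B"
    and "mat_adjoint (minv B * b) * C * (minv B * b)
      = mat_adjoint b * minv B * b - (mat_adjoint b * minv B * b) * (mat_adjoint b * minv B * b)"
proof -
  have bH: "mat_adjoint b \<in> carrier_mat N n" using b by (rule mat_adjoint_carrier_mat)
  have bbH: "b * mat_adjoint b \<in> carrier_mat n n" using b bH by simp
  have B: "B \<in> carrier_mat n n" unfolding B_def using C bbH by simp
  note Bi = minv_inverse[OF B iB]
  note asc = assoc_mult_mat_dims carrier_matD[OF b] carrier_matD[OF bH] carrier_matD[OF B]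
    carrier_matD[OF Bi(1)]
  have "hermitian B"
    using hC mat_adjoint_add[OF C bbH] mat_adjoint_mult[OF b bH] unfolding B_def hermitian_def by simp
  then show AH: "mat_adjoint (minv B * b) = mat_adjoint b * minv B"
    using mat_adjoint_mult[OF Bi(1) b] hermitian_minv[OF B iB] unfolding hermitian_def by simp
  have "C = B - b * mat_adjoint b" unfolding B_def using C bbH by (intro eq_matI) auto
  then have "mat_adjoint (minv B * b) * C * (minv B * b)
      = mat_adjoint b * (minv B * (B - b * mat_adjoint b) * minv B) * b"
    unfolding AH using b bH Bi(1) by (simp add: asc)
  also have "minv B * (B - b * mat_adjoint b) * minv B = minv B - minv B * b * (mat_adjoint b * minv B)"
    using Bi B bbH b bH by (simp add: mult_minus_distrib_mat[of _ n n] minus_mult_distrib_mat[of _ n n] asc)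
  also have "mat_adjoint b * \<dots> * b
      = mat_adjoint b * minv B * b - (mat_adjoint b * minv B * b) * (mat_adjoint b * minv B * b)"
    using bH b Bi(1) by (simp add: mult_minus_distrib_mat[of _ N n] minus_mult_distrib_mat[of _ N n] asc)
  finally show "mat_adjoint (minv B * b) * C * (minv B * b)
      = mat_adjoint b * minv B * b - (mat_adjoint b * minv B * b) * (mat_adjoint b * minv B * b)" .
qed

lemma det_gain_optimal:
  fixes C b :: "complex mat"
  defines "A0 \<equiv> minv (C + b * mat_adjoint b) * b"
  assumes C: "C \<in> carrier_mat n n" and hC: "hermitian C" and iC: "invertible_mat C"
    and b: "b \<in> carrier_mat n N" and iB: "invertible_mat (C + b * mat_adjoint b)"
    and iS: "invertible_mat (mat_adjoint A0 * C * A0)"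
  shows "det_gain C b A0 = det (1\<^sub>m N + mat_adjoint b * minv C * b)"
proof -
  define K where "K = mat_adjoint b * minv (C + b * mat_adjoint b) * b"
  define Y where "Y = mat_adjoint b * minv C * b"
  have bH: "mat_adjoint b \<in> carrier_mat N n" using b by (rule mat_adjoint_carrier_mat)
  have B: "C + b * mat_adjoint b \<in> carrier_mat n n" using C b bH by simp
  have K: "K \<in> carrier_mat N N" unfolding K_def using bH minv_inverse(1)[OF B iB] b by simp
  have Y: "Y \<in> carrier_mat N N" unfolding Y_def using bH minv_inverse(1)[OF C iC] b by simp
  note update = minv_rank_update_congruence[OF C hC b iB, folded A0_def K_def]
  have "mat_adjoint (mat_adjoint b * minv (C + b * mat_adjoint b)) = minv (C + b * mat_adjoint b) * b"
    using arg_cong[OF update(1), of mat_adjoint] unfolding A0_def by simp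
  then have "hermitian K"
    using mat_adjoint_mult[OF mult_carrier_mat[OF bH minv_inverse(1)[OF B iB]] b]
      bH b minv_inverse(1)[OF B iB]
    unfolding K_def hermitian_def by (simp add: assoc_mult_mat[of _ N n _ n _ N])
  moreover have "K * Y = Y - K" unfolding K_def Y_def by (rule minv_rank_update_mult[OF C iC b iB])
  moreover have "mat_adjoint A0 * b = K" unfolding update(1) K_def ..
  ultimately show ?thesis
    unfolding det_gain_def update(2) Y_def[symmetric] using b K Y iS[unfolded update(2)]
    by (simp add: adjoint_minv_sandwich_eq)
qed

section \<open>Expectations of random matrices\<close>

definition mat_integrable :: "'w measure \<Rightarrow> nat \<Rightarrow> nat \<Rightarrow> ('w \<Rightarrow> complex mat) \<Rightarrow> bool" where
  "mat_integrable P nr nc X \<longleftrightarrow> (\<forall>i < nr. \<forall>j < nc. integrable P (\<lambda>\<omega>. X \<omega> $$ (i,j)))"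

lemma dim_row_mexp [simp]: "dim_row (mexp P nr nc X) = nr"
  and dim_col_mexp [simp]: "dim_col (mexp P nr nc X) = nc"
  and mexp_carrier_mat [simp]: "mexp P nr nc X \<in> carrier_mat nr nc"
  by (simp_all add: mexp_def)

lemma index_mexp [simp]:
  "i < nr \<Longrightarrow> j < nc \<Longrightarrow> mexp P nr nc X $$ (i,j) = (LINT \<omega>|P. X \<omega> $$ (i,j))"
  by (simp add: mexp_def)

lemma mexp_mult_right:
  assumes X: "\<And>\<omega>. X \<omega> \<in> carrier_mat nr n" and int: "mat_integrable P nr n X"
    and A: "A \<in> carrier_mat n nc"
  shows "mexp P nr nc (\<lambda>\<omega>. X \<omega> * A) = mexp P nr n X * A"
proof (rule eq_matI)
  fix i j assume "i < dim_row (mexp P nr n X * A)" "j < dim_col (mexp P nr n X * A)"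
  then have i: "i < nr" and j: "j < nc" using A by auto
  have "(LINT \<omega>|P. (X \<omega> * A) $$ (i,j)) = (LINT \<omega>|P. (\<Sum>q<n. X \<omega> $$ (i,q) * A $$ (q,j)))"
    using A i j by (simp add: carrier_matD[OF X] scalar_prod_def lessThan_atLeast0)
  also have "\<dots> = (\<Sum>q<n. (LINT \<omega>|P. X \<omega> $$ (i,q)) * A $$ (q,j))"
    using int i unfolding mat_integrable_def by (subst Bochner_Integration.integral_sum) auto
  finally show "mexp P nr nc (\<lambda>\<omega>. X \<omega> * A) $$ (i,j) = (mexp P nr n X * A) $$ (i,j)"
    using A i j by (simp add: scalar_prod_def lessThan_atLeast0)
qed (use A in auto)

lemma mat_integrable_mult_right:
  assumes X: "\<And>\<omega>. X \<omega> \<in> carrier_mat nr n" and int: "mat_integrable P nr n X"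
    and A: "A \<in> carrier_mat n nc"
  shows "mat_integrable P nr nc (\<lambda>\<omega>. X \<omega> * A)"
  unfolding mat_integrable_def
proof (intro allI impI)
  fix i j assume i: "i < nr" and j: "j < nc"
  have "(\<lambda>\<omega>. (X \<omega> * A) $$ (i,j)) = (\<lambda>\<omega>. \<Sum>q<n. X \<omega> $$ (i,q) * A $$ (q,j))"
    using A i j by (simp add: carrier_matD[OF X] scalar_prod_def lessThan_atLeast0)
  moreover have "integrable P (\<lambda>\<omega>. \<Sum>q<n. X \<omega> $$ (i,q) * A $$ (q,j))"
    using int i unfolding mat_integrable_def
    by (intro Bochner_Integration.integrable_sum integrable_mult_left) auto
  ultimately show "integrable P (\<lambda>\<omega>. (X \<omega> * A) $$ (i,j))" by simp
qed

lemma integrable_cnj_mult_L2: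
  fixes f g :: "'w \<Rightarrow> complex"
  assumes f: "f \<in> borel_measurable P" "integrable P (\<lambda>\<omega>. (cmod (f \<omega>))\<^sup>2)"
    and g: "g \<in> borel_measurable P" "integrable P (\<lambda>\<omega>. (cmod (g \<omega>))\<^sup>2)"
  shows "integrable P (\<lambda>\<omega>. cnj (f \<omega>) * g \<omega>)"
proof (rule Bochner_Integration.integrable_bound)
  show "integrable P (\<lambda>\<omega>. (cmod (f \<omega>))\<^sup>2 + (cmod (g \<omega>))\<^sup>2)" using f g by simp
  have "(\<lambda>\<omega>. cnj (f \<omega>)) \<in> borel_measurable P"
    by (rule borel_measurable_continuous_on[OF _ f(1)]) (auto intro: continuous_intros)
  then show "(\<lambda>\<omega>. cnj (f \<omega>) * g \<omega>) \<in> borel_measurable P"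
    using g(1) by (rule borel_measurable_times)
  show "AE \<omega> in P. norm (cnj (f \<omega>) * g \<omega>) \<le> norm ((cmod (f \<omega>))\<^sup>2 + (cmod (g \<omega>))\<^sup>2)"
  proof (rule AE_I2)
    fix \<omega>
    have "(cmod (f \<omega>) - cmod (g \<omega>))\<^sup>2
        = (cmod (f \<omega>))\<^sup>2 - 2 * cmod (f \<omega>) * cmod (g \<omega>) + (cmod (g \<omega>))\<^sup>2"
      by (simp add: power2_diff)
    moreover have "0 \<le> (cmod (f \<omega>) - cmod (g \<omega>))\<^sup>2" "0 \<le> cmod (f \<omega>) * cmod (g \<omega>)" by simp_all
    ultimately have "cmod (f \<omega>) * cmod (g \<omega>) \<le> (cmod (f \<omega>))\<^sup>2 + (cmod (g \<omega>))\<^sup>2" by linarith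
    then show "norm (cnj (f \<omega>) * g \<omega>) \<le> norm ((cmod (f \<omega>))\<^sup>2 + (cmod (g \<omega>))\<^sup>2)"
      by (simp add: norm_mult)
  qed
qed

lemma mat_integrable_adjoint_mult:
  fixes A B :: "'w \<Rightarrow> complex mat"
  assumes A: "\<And>\<omega>. A \<omega> \<in> carrier_mat L n1" and B: "\<And>\<omega>. B \<omega> \<in> carrier_mat L n2"
    and A_meas: "\<And>p j. p < L \<Longrightarrow> j < n1 \<Longrightarrow> (\<lambda>\<omega>. A \<omega> $$ (p,j)) \<in> borel_measurable P"
    and B_meas: "\<And>p j. p < L \<Longrightarrow> j < n2 \<Longrightarrow> (\<lambda>\<omega>. B \<omega> $$ (p,j)) \<in> borel_measurable P"
    and A_L2: "\<And>p j. p < L \<Longrightarrow> j < n1 \<Longrightarrow> integrable P (\<lambda>\<omega>. (cmod (A \<omega> $$ (p,j)))\<^sup>2)"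
    and B_L2: "\<And>p j. p < L \<Longrightarrow> j < n2 \<Longrightarrow> integrable P (\<lambda>\<omega>. (cmod (B \<omega> $$ (p,j)))\<^sup>2)"
  shows "mat_integrable P n1 n2 (\<lambda>\<omega>. mat_adjoint (A \<omega>) * B \<omega>)"
  unfolding mat_integrable_def
proof (intro allI impI)
  fix i j assume i: "i < n1" and j: "j < n2"
  have "(\<lambda>\<omega>. (mat_adjoint (A \<omega>) * B \<omega>) $$ (i,j)) = (\<lambda>\<omega>. \<Sum>p<L. cnj (A \<omega> $$ (p,i)) * B \<omega> $$ (p,j))"
    using i j by (simp add: carrier_matD[OF A] carrier_matD[OF B] scalar_prod_def lessThan_atLeast0)
  moreover have "integrable P (\<lambda>\<omega>. \<Sum>p<L. cnj (A \<omega> $$ (p,i)) * B \<omega> $$ (p,j))"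
    using i j A_meas B_meas A_L2 B_L2
    by (intro Bochner_Integration.integrable_sum integrable_cnj_mult_L2) auto
  ultimately show "integrable P (\<lambda>\<omega>. (mat_adjoint (A \<omega>) * B \<omega>) $$ (i,j))" by simp
qed

lemma integral_quad_form:
  assumes X: "\<And>\<omega>. X \<omega> \<in> carrier_mat n n" and int: "mat_integrable P n n X"
    and v: "v \<in> carrier_vec n"
  shows "integrable P (\<lambda>\<omega>. quad_form (X \<omega>) v)"
    and "(LINT \<omega>|P. quad_form (X \<omega>) v) = quad_form (mexp P n n X) v"
proof -
  have ij: "integrable P (\<lambda>\<omega>. cnj (v $ i) * X \<omega> $$ (i,j) * v $ j)" if "i < n" "j < n" for i j
    using int that unfolding mat_integrable_def by simp
  show "integrable P (\<lambda>\<omega>. quad_form (X \<omega>) v)"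
    unfolding quad_form_expand[OF X v] by (intro Bochner_Integration.integrable_sum ij) auto
  have "(LINT \<omega>|P. quad_form (X \<omega>) v)
      = (\<Sum>i<n. LINT \<omega>|P. (\<Sum>j<n. cnj (v $ i) * X \<omega> $$ (i,j) * v $ j))"
    unfolding quad_form_expand[OF X v]
    by (intro Bochner_Integration.integral_sum Bochner_Integration.integrable_sum ij) auto
  also have "\<dots> = (\<Sum>i<n. \<Sum>j<n. LINT \<omega>|P. cnj (v $ i) * X \<omega> $$ (i,j) * v $ j)"
    by (intro sum.cong refl Bochner_Integration.integral_sum ij) auto
  also have "\<dots> = quad_form (mexp P n n X) v"
    using v by (simp add: quad_form_expand[OF mexp_carrier_mat v])
  finally show "(LINT \<omega>|P. quad_form (X \<omega>) v) = quad_form (mexp P n n X) v" .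
qed

lemma integral_nonneg_complex:
  fixes f :: "'w \<Rightarrow> complex"
  assumes "\<And>\<omega>. 0 \<le> f \<omega>"
  shows "0 \<le> (LINT \<omega>|P. f \<omega>)"
proof -
  have "f = (\<lambda>\<omega>. complex_of_real (Re (f \<omega>)))"
    using assms by (auto simp: less_eq_complex_def complex_eq_iff)
  then have "(LINT \<omega>|P. f \<omega>) = of_real (LINT \<omega>|P. Re (f \<omega>))"
    by (metis integral_complex_of_real)
  moreover have "0 \<le> (LINT \<omega>|P. Re (f \<omega>))"
    using assms by (intro Bochner_Integration.integral_nonneg) (auto simp: less_eq_complex_def)
  ultimately show ?thesis by (simp add: less_eq_complex_def)
qed

lemma psd_mexp:
  assumes X: "\<And>\<omega>. X \<omega> \<in> carrier_mat n n" and int: "mat_integrable P n n X"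
    and psd: "\<And>\<omega>. psd (X \<omega>)"
  shows "psd (mexp P n n X)"
proof (rule psdI[OF mexp_carrier_mat])
  fix v :: "complex vec" assume v: "v \<in> carrier_vec n"
  show "0 \<le> quad_form (mexp P n n X) v"
    unfolding integral_quad_form(2)[OF X int v, symmetric]
    by (rule integral_nonneg_complex) (rule psdD[OF psd X v])
qed

lemma cmod_integral_sq_le:
  fixes f :: "'w \<Rightarrow> complex"
  assumes P: "prob_space P" and f: "integrable P f" and f2: "integrable P (\<lambda>\<omega>. (cmod (f \<omega>))\<^sup>2)"
  shows "(cmod (LINT \<omega>|P. f \<omega>))\<^sup>2 \<le> (LINT \<omega>|P. (cmod (f \<omega>))\<^sup>2)"
proof -
  interpret prob_space P by (rule P)
  have "cmod (LINT \<omega>|P. f \<omega>) \<le> (LINT \<omega>|P. cmod (f \<omega>))" by (rule integral_norm_bound)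
  then have "(cmod (LINT \<omega>|P. f \<omega>))\<^sup>2 \<le> (LINT \<omega>|P. cmod (f \<omega>))\<^sup>2" by (simp add: power_mono)
  also have "\<dots> \<le> (LINT \<omega>|P. (cmod (f \<omega>))\<^sup>2)"
    using variance_eq[of "\<lambda>\<omega>. cmod (f \<omega>)"] variance_positive[of "\<lambda>\<omega>. cmod (f \<omega>)"] f f2 by simp
  finally show ?thesis .
qed

lemma integrable_nonneg_summand:
  fixes g :: "'i \<Rightarrow> 'w \<Rightarrow> real"
  assumes int: "integrable P (\<lambda>\<omega>. \<Sum>i\<in>I. g i \<omega>)" and I: "finite I" "j \<in> I"
    and nonneg: "\<And>i \<omega>. i \<in> I \<Longrightarrow> 0 \<le> g i \<omega>" and meas: "g j \<in> borel_measurable P"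
  shows "integrable P (g j)"
proof (rule Bochner_Integration.integrable_bound[OF int meas], rule AE_I2)
  fix \<omega>
  have "g j \<omega> \<le> (\<Sum>i\<in>I. g i \<omega>)" using I nonneg by (intro member_le_sum) auto
  then show "norm (g j \<omega>) \<le> norm (\<Sum>i\<in>I. g i \<omega>)"
    using nonneg[OF I(2)] by (simp add: sum_nonneg nonneg)
qed

lemma scalar_prod_conj_self:
  fixes w :: "complex vec"
  assumes "w \<in> carrier_vec n"
  shows "w \<bullet>c w = complex_of_real (\<Sum>i<n. (cmod (w $ i))\<^sup>2)"
proof -
  have "z * cnj z = (complex_of_real (cmod z))\<^sup>2" for z :: complex
    by (metis complex_norm_square of_real_power)
  then show ?thesis using assms by (simp add: scalar_prod_def lessThan_atLeast0)
qed

lemma quad_form_outer: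
  fixes T :: "complex mat"
  assumes T: "T \<in> carrier_mat n p" and v: "v \<in> carrier_vec n"
  shows "quad_form (T * mat_adjoint T) v = complex_of_real (\<Sum>i<p. (cmod ((mat_adjoint T *\<^sub>v v) $ i))\<^sup>2)"
proof -
  have TH: "mat_adjoint T \<in> carrier_mat p n" using T by (rule mat_adjoint_carrier_mat)
  have "quad_form (T * mat_adjoint T) v = (mat_adjoint T *\<^sub>v v) \<bullet>c (mat_adjoint T *\<^sub>v v)"
    using quad_form_gram[OF TH v] by simp
  also have "\<dots> = complex_of_real (\<Sum>i<p. (cmod ((mat_adjoint T *\<^sub>v v) $ i))\<^sup>2)"
    using TH v by (intro scalar_prod_conj_self) simp
  finally show ?thesis .
qed

lemma mexp_adjoint_mult_vec:
  assumes X: "\<And>\<omega>. X \<omega> \<in> carrier_mat n p" and int: "mat_integrable P n p X"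
    and v: "v \<in> carrier_vec n" and i: "i < p"
  shows "integrable P (\<lambda>\<omega>. (mat_adjoint (X \<omega>) *\<^sub>v v) $ i)"
    and "(mat_adjoint (mexp P n p X) *\<^sub>v v) $ i = (LINT \<omega>|P. (mat_adjoint (X \<omega>) *\<^sub>v v) $ i)"
proof -
  have entry: "(mat_adjoint (X \<omega>) *\<^sub>v v) $ i = (\<Sum>q<n. cnj (X \<omega> $$ (q,i)) * v $ q)" for \<omega>
    using v i by (simp add: carrier_matD[OF X] scalar_prod_def lessThan_atLeast0)
  have q: "integrable P (\<lambda>\<omega>. cnj (X \<omega> $$ (q,i)) * v $ q)" if "q < n" for q
    using int i that unfolding mat_integrable_def by simp
  show "integrable P (\<lambda>\<omega>. (mat_adjoint (X \<omega>) *\<^sub>v v) $ i)"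
    unfolding entry by (intro Bochner_Integration.integrable_sum q) auto
  have "(LINT \<omega>|P. (mat_adjoint (X \<omega>) *\<^sub>v v) $ i) = (\<Sum>q<n. LINT \<omega>|P. cnj (X \<omega> $$ (q,i)) * v $ q)"
    unfolding entry by (intro Bochner_Integration.integral_sum q) auto
  also have "\<dots> = (mat_adjoint (mexp P n p X) *\<^sub>v v) $ i"
    using v i by (simp add: scalar_prod_def lessThan_atLeast0)
  finally show "(mat_adjoint (mexp P n p X) *\<^sub>v v) $ i = (LINT \<omega>|P. (mat_adjoint (X \<omega>) *\<^sub>v v) $ i)" ..
qed

lemma psd_mexp_outer_minus_outer_mexp:
  fixes X :: "'w \<Rightarrow> complex mat"
  assumes P: "prob_space P" and X: "\<And>\<omega>. X \<omega> \<in> carrier_mat n p"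
    and X_int: "mat_integrable P n p X"
    and XX_int: "mat_integrable P n n (\<lambda>\<omega>. X \<omega> * mat_adjoint (X \<omega>))"
  shows "psd (mexp P n n (\<lambda>\<omega>. X \<omega> * mat_adjoint (X \<omega>)) - mexp P n p X * mat_adjoint (mexp P n p X))"
proof -
  let ?E = "mexp P n p X" and ?XX = "\<lambda>\<omega>. X \<omega> * mat_adjoint (X \<omega>)"
  have XX: "?XX \<omega> \<in> carrier_mat n n" for \<omega>
    using mult_carrier_mat[OF X mat_adjoint_carrier_mat[OF X]] .
  have EE: "?E * mat_adjoint ?E \<in> carrier_mat n n"
    using mult_carrier_mat[OF mexp_carrier_mat mat_adjoint_carrier_mat[OF mexp_carrier_mat]] .
  have "quad_form (?E * mat_adjoint ?E) v \<le> quad_form (mexp P n n ?XX) v" if v: "v \<in> carrier_vec n" for v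
  proof -
    define y where "y \<omega> i = (mat_adjoint (X \<omega>) *\<^sub>v v) $ i" for \<omega> i
    note y_int = mexp_adjoint_mult_vec(1)[OF X X_int v, folded y_def]
    have "integrable P (\<lambda>\<omega>. complex_of_real (\<Sum>i<p. (cmod (y \<omega> i))\<^sup>2))"
      using integral_quad_form(1)[OF XX XX_int v] unfolding quad_form_outer[OF X v] y_def .
    then have sum_int: "integrable P (\<lambda>\<omega>. \<Sum>i<p. (cmod (y \<omega> i))\<^sup>2)"
      by (simp only: complex_of_real_integrable_eq)
    have y2_int: "integrable P (\<lambda>\<omega>. (cmod (y \<omega> i))\<^sup>2)" if i: "i < p" for i
    proof -
      have "(\<lambda>\<omega>. y \<omega> i) \<in> borel_measurable P" using y_int[OF i] by (rule borel_measurable_integrable)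
      then have "(\<lambda>\<omega>. (cmod (y \<omega> i))\<^sup>2) \<in> borel_measurable P" by measurable
      then show ?thesis using i by (intro integrable_nonneg_summand[OF sum_int]) auto
    qed
    have "quad_form (?E * mat_adjoint ?E) v = complex_of_real (\<Sum>i<p. (cmod (LINT \<omega>|P. y \<omega> i))\<^sup>2)"
      unfolding quad_form_outer[OF mexp_carrier_mat v] y_def
      using mexp_adjoint_mult_vec(2)[OF X X_int v] by simp
    also have "\<dots> \<le> complex_of_real (\<Sum>i<p. LINT \<omega>|P. (cmod (y \<omega> i))\<^sup>2)"
      using cmod_integral_sq_le[OF P y_int y2_int]
      by (simp add: less_eq_complex_def) (intro sum_mono, simp)
    also have "\<dots> = complex_of_real (LINT \<omega>|P. (\<Sum>i<p. (cmod (y \<omega> i))\<^sup>2))"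
      by (subst Bochner_Integration.integral_sum) (auto intro: y2_int)
    also have "\<dots> = (LINT \<omega>|P. quad_form (?XX \<omega>) v)"
      unfolding quad_form_outer[OF X v] y_def by (rule integral_complex_of_real[symmetric])
    also have "\<dots> = quad_form (mexp P n n ?XX) v" by (rule integral_quad_form(2)[OF XX XX_int v])
    finally show ?thesis .
  qed
  then show ?thesis
    using EE by (intro psdI[of _ n]) (auto simp: quad_form_minus[OF mexp_carrier_mat EE])
qed

section \<open>The cell-free uplink\<close>

lemma Gmat_carrier_mat: "Gmat M N V H k l \<omega> \<in> carrier_mat (M*N) N"
  by (simp add: Gmat_def)

lemma EGFG_carrier_mat: "EGFG P M N V H F k l \<in> carrier_mat (M*N) (M*N)"
  by (simp add: EGFG_def)

lemma EG_carrier_mat: "EG P M N V H k \<in> carrier_mat (M*N) N"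
  by (simp add: EG_def)

lemma Smat_carrier_mat: "Smat P M N V k \<in> carrier_mat (M*N) (M*N)"
  by (simp add: Smat_def)

lemma Smat_eq_block_diag:
  "Smat P M N V k = block_diag M N (\<lambda>m. mexp P N N (\<lambda>\<omega>. mat_adjoint (V m k \<omega>) * V m k \<omega>))"
  by (simp add: Smat_def block_diag_def)

lemma EG_Fbar_eq:
  assumes "F k \<in> carrier_mat N N"
  shows "EG P M N V H k * Fbar F k * mat_adjoint (EG P M N V H k)
    = (EG P M N V H k * F k) * mat_adjoint (EG P M N V H k * F k)"
  unfolding Fbar_def by (rule mult_outer_mult_adjoint[OF EG_carrier_mat assms])

definition ipn_cov :: "'w measure \<Rightarrow> nat \<Rightarrow> nat \<Rightarrow> nat \<Rightarrow> (nat \<Rightarrow> nat \<Rightarrow> 'w \<Rightarrow> complex mat)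
    \<Rightarrow> (nat \<Rightarrow> nat \<Rightarrow> 'w \<Rightarrow> complex mat) \<Rightarrow> (nat \<Rightarrow> complex mat) \<Rightarrow> real \<Rightarrow> nat \<Rightarrow> complex mat" where
  "ipn_cov P M N K V H F \<sigma>2 k =
     msum (M*N) (M*N) (\<lambda>l. EGFG P M N V H F k l) {0..<K}
     - EG P M N V H k * Fbar F k * mat_adjoint (EG P M N V H k)
     + complex_of_real \<sigma>2 \<cdot>\<^sub>m Smat P M N V k"

lemma ipn_cov_carrier_mat: "ipn_cov P M N K V H F \<sigma>2 k \<in> carrier_mat (M*N) (M*N)"
  unfolding ipn_cov_def by (rule add_carrier_mat[OF smult_carrier_mat[OF Smat_carrier_mat]])

lemma ipn_cov_plus_outer:
  assumes "F k \<in> carrier_mat N N"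
  shows "ipn_cov P M N K V H F \<sigma>2 k + (EG P M N V H k * F k) * mat_adjoint (EG P M N V H k * F k)
    = msum (M*N) (M*N) (\<lambda>l. EGFG P M N V H F k l) {0..<K} + complex_of_real \<sigma>2 \<cdot>\<^sub>m Smat P M N V k"
  unfolding ipn_cov_def EG_Fbar_eq[where F = F and k = k, OF assms]
  by (intro eq_matI)
    (auto simp: carrier_matD[OF Smat_carrier_mat] carrier_matD[OF EG_carrier_mat] carrier_matD[OF assms])

lemma Dmat_eq:
  assumes A: "A \<in> carrier_mat (M*N) N" and F: "F k \<in> carrier_mat N N"
  shows "Dmat P M N V H F k A = mat_adjoint A * (EG P M N V H k * F k)"
  unfolding Dmat_def by (rule assoc_mult_mat[OF mat_adjoint_carrier_mat[OF A] EG_carrier_mat F])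

lemma Sigma_eq:
  assumes A: "A \<in> carrier_mat (M*N) N" and F: "F k \<in> carrier_mat N N"
  shows "Sigma P M N K V H F \<sigma>2 k A = mat_adjoint A * ipn_cov P M N K V H F \<sigma>2 k * A"
proof -
  let ?b = "EG P M N V H k * F k"
  have AH: "mat_adjoint A \<in> carrier_mat N (M*N)" using A by (rule mat_adjoint_carrier_mat)
  have b: "?b \<in> carrier_mat (M*N) N" using EG_carrier_mat F by (rule mult_carrier_mat)
  have bH: "mat_adjoint ?b \<in> carrier_mat N (M*N)" using b by (rule mat_adjoint_carrier_mat)
  have D: "Dmat P M N V H F k A * mat_adjoint (Dmat P M N V H F k A) = mat_adjoint A * (?b * mat_adjoint ?b) * A"
    unfolding Dmat_eq[where F = F and k = k, OF A F] mat_adjoint_mult[OF AH b]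
    by (simp add: assoc_mult_mat_dims carrier_matD[OF A] carrier_matD[OF F] carrier_matD[OF EG_carrier_mat])
  have Es: "msum N N (\<lambda>l. mat_adjoint A * EGFG P M N V H F k l * A) {0..<K}
      = mat_adjoint A * msum (M*N) (M*N) (\<lambda>l. EGFG P M N V H F k l) {0..<K} * A"
    by (rule msum_congruence[OF _ EGFG_carrier_mat AH A]) simp
  show ?thesis
    unfolding Sigma_def ipn_cov_def EG_Fbar_eq[where F = F and k = k, OF F] D Es
    by (rule congruence_minus_add_smult[OF AH A msum_carrier_mat mult_carrier_mat[OF b bH] Smat_carrier_mat,
          symmetric])
qed

lemma SE_eq_det_gain:
  assumes A: "A \<in> carrier_mat (M*N) N" and F: "F k \<in> carrier_mat N N"
  shows "SE P M N K V H F \<sigma>2 \<tau>p \<tau>c k A = (1 - real \<tau>p / real \<tau>c)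
    * log 2 (Re (det_gain (ipn_cov P M N K V H F \<sigma>2 k) (EG P M N V H k * F k) A))"
  unfolding SE_def det_gain_def Dmat_eq[where F = F and k = k, OF A F] Sigma_eq[where F = F and k = k, OF A F]
  using F by simp

locale cell_free_uplink =
  fixes P :: "'w measure"
    and M L K N k :: nat
    and H V :: "nat \<Rightarrow> nat \<Rightarrow> 'w \<Rightarrow> complex mat"
    and F :: "nat \<Rightarrow> complex mat"
  assumes P: "prob_space P"
    and k: "k < K"
    and H_dim: "\<And>m l \<omega>. m < M \<Longrightarrow> l < K \<Longrightarrow> H m l \<omega> \<in> carrier_mat L N"
    and V_dim: "\<And>m l \<omega>. m < M \<Longrightarrow> l < K \<Longrightarrow> V m l \<omega> \<in> carrier_mat L N"
    and H_meas: "\<And>m l i j. m < M \<Longrightarrow> l < K \<Longrightarrow> i < L \<Longrightarrow> j < N \<Longrightarrow>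
                   (\<lambda>\<omega>. H m l \<omega> $$ (i,j)) \<in> borel_measurable P"
    and V_meas: "\<And>m l i j. m < M \<Longrightarrow> l < K \<Longrightarrow> i < L \<Longrightarrow> j < N \<Longrightarrow>
                   (\<lambda>\<omega>. V m l \<omega> $$ (i,j)) \<in> borel_measurable P"
    and H_L2: "\<And>m l i j. m < M \<Longrightarrow> l < K \<Longrightarrow> i < L \<Longrightarrow> j < N \<Longrightarrow>
                   integrable P (\<lambda>\<omega>. (cmod (H m l \<omega> $$ (i,j)))^2)"
    and V_L2: "\<And>m l i j. m < M \<Longrightarrow> l < K \<Longrightarrow> i < L \<Longrightarrow> j < N \<Longrightarrow>
                   integrable P (\<lambda>\<omega>. (cmod (V m l \<omega> $$ (i,j)))^2)"
    and GFG_int: "\<And>l i j. l < K \<Longrightarrow> i < M*N \<Longrightarrow> j < M*N \<Longrightarrow>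
                   integrable P (\<lambda>\<omega>. (Gmat M N V H k l \<omega> * Fbar F l
                                       * mat_adjoint (Gmat M N V H k l \<omega>)) $$ (i,j))"
    and F_dim: "\<And>l. l < K \<Longrightarrow> F l \<in> carrier_mat N N"
begin

lemma mat_integrable_VH:
  assumes "m < M" "l < K"
  shows "mat_integrable P N N (\<lambda>\<omega>. mat_adjoint (V m k \<omega>) * H m l \<omega>)"
  using assms k by (intro mat_integrable_adjoint_mult[of _ L] V_dim H_dim V_meas H_meas V_L2 H_L2)

lemma mat_integrable_Gmat:
  assumes l: "l < K"
  shows "mat_integrable P (M*N) N (Gmat M N V H k l)"
  unfolding mat_integrable_def
proof (intro allI impI)
  fix i j assume i: "i < M*N" and j: "j < N"
  have "i div N < M" "i mod N < N" using i j by (simp_all add: less_mult_imp_div_less)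
  then have "integrable P (\<lambda>\<omega>. (mat_adjoint (V (i div N) k \<omega>) * H (i div N) l \<omega>) $$ (i mod N, j))"
    using mat_integrable_VH[OF _ l] j unfolding mat_integrable_def by blast
  then show "integrable P (\<lambda>\<omega>. Gmat M N V H k l \<omega> $$ (i,j))"
    using i j by (simp add: Gmat_def)
qed

lemma Gmat_Fbar_eq:
  assumes "l < K"
  shows "Gmat M N V H k l \<omega> * Fbar F l * mat_adjoint (Gmat M N V H k l \<omega>)
    = (Gmat M N V H k l \<omega> * F l) * mat_adjoint (Gmat M N V H k l \<omega> * F l)"
  unfolding Fbar_def by (rule mult_outer_mult_adjoint[OF Gmat_carrier_mat F_dim[OF assms]])

lemma EGFG_eq_mexp_outer:
  assumes l: "l < K"
  shows "EGFG P M N V H F k l = mexp P (M*N) (M*N)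
    (\<lambda>\<omega>. (Gmat M N V H k l \<omega> * F l) * mat_adjoint (Gmat M N V H k l \<omega> * F l))"
  unfolding EGFG_def Gmat_Fbar_eq[OF l] ..

lemma psd_EGFG:
  assumes l: "l < K"
  shows "psd (EGFG P M N V H F k l)"
  unfolding EGFG_eq_mexp_outer[OF l]
proof (rule psd_mexp)
  let ?X = "\<lambda>\<omega>. Gmat M N V H k l \<omega> * F l"
  have X: "?X \<omega> \<in> carrier_mat (M*N) N" for \<omega> using Gmat_carrier_mat F_dim[OF l] by (rule mult_carrier_mat)
  show "?X \<omega> * mat_adjoint (?X \<omega>) \<in> carrier_mat (M*N) (M*N)" for \<omega>
    using mult_carrier_mat[OF X mat_adjoint_carrier_mat[OF X]] .
  show "psd (?X \<omega> * mat_adjoint (?X \<omega>))" for \<omega>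
    using psd_gram[OF mat_adjoint_carrier_mat[OF X]] by simp
  show "mat_integrable P (M*N) (M*N) (\<lambda>\<omega>. ?X \<omega> * mat_adjoint (?X \<omega>))"
    using GFG_int[OF l] Gmat_Fbar_eq[OF l]
    unfolding mat_integrable_def by simp
qed

lemma psd_EGFG_minus_outer_EG:
  "psd (EGFG P M N V H F k k - (EG P M N V H k * F k) * mat_adjoint (EG P M N V H k * F k))"
proof -
  let ?X = "\<lambda>\<omega>. Gmat M N V H k k \<omega> * F k"
  have X: "?X \<omega> \<in> carrier_mat (M*N) N" for \<omega> using Gmat_carrier_mat F_dim[OF k] by (rule mult_carrier_mat)
  have X_int: "mat_integrable P (M*N) N ?X"
    by (rule mat_integrable_mult_right[OF Gmat_carrier_mat mat_integrable_Gmat[OF k] F_dim[OF k]])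
  have XX_int: "mat_integrable P (M*N) (M*N) (\<lambda>\<omega>. ?X \<omega> * mat_adjoint (?X \<omega>))"
    using GFG_int[OF k] Gmat_Fbar_eq[OF k]
    unfolding mat_integrable_def by simp
  have "mexp P (M*N) N ?X = EG P M N V H k * F k"
    unfolding EG_def by (rule mexp_mult_right[OF Gmat_carrier_mat mat_integrable_Gmat[OF k] F_dim[OF k]])
  then show ?thesis
    using psd_mexp_outer_minus_outer_mexp[OF P X X_int XX_int] unfolding EGFG_eq_mexp_outer[OF k] by simp
qed

lemma psd_Smat: "psd (Smat P M N V k)"
  unfolding Smat_eq_block_diag
proof (rule psd_block_diag)
  fix m assume m: "m < M"
  let ?VV = "\<lambda>\<omega>. mat_adjoint (V m k \<omega>) * V m k \<omega>"
  have V: "V m k \<omega> \<in> carrier_mat L N" for \<omega> by (rule V_dim[OF m k])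
  show "mexp P N N ?VV \<in> carrier_mat N N" by simp
  show "psd (mexp P N N ?VV)"
  proof (rule psd_mexp)
    show "?VV \<omega> \<in> carrier_mat N N" for \<omega> using mult_carrier_mat[OF mat_adjoint_carrier_mat[OF V] V] .
    show "psd (?VV \<omega>)" for \<omega> by (rule psd_gram[OF V])
    show "mat_integrable P N N ?VV"
      using m k by (intro mat_integrable_adjoint_mult[of _ L] V_dim V_meas V_L2)
  qed
qed

lemma psd_ipn_cov:
  assumes \<sigma>2: "0 \<le> \<sigma>2"
  shows "psd (ipn_cov P M N K V H F \<sigma>2 k)"
proof (rule psdI[OF ipn_cov_carrier_mat])
  let ?Es = "msum (M*N) (M*N) (\<lambda>l. EGFG P M N V H F k l) {0..<K}"
  let ?X = "EG P M N V H k * Fbar F k * mat_adjoint (EG P M N V H k)"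
  let ?c = "complex_of_real \<sigma>2" and ?S = "Smat P M N V k"
  let ?b = "EG P M N V H k * F k"
  have b: "?b \<in> carrier_mat (M*N) N" using EG_carrier_mat F_dim[OF k] by (rule mult_carrier_mat)
  have X: "?X \<in> carrier_mat (M*N) (M*N)"
    unfolding EG_Fbar_eq[where F = F and k = k, OF F_dim[OF k]] using mult_carrier_mat[OF b mat_adjoint_carrier_mat[OF b]] .
  note S = Smat_carrier_mat and E = EGFG_carrier_mat
  fix v :: "complex vec" assume v: "v \<in> carrier_vec (M*N)"
  have "quad_form (ipn_cov P M N K V H F \<sigma>2 k) v = quad_form (?Es - ?X) v + quad_form (?c \<cdot>\<^sub>m ?S) v"
    unfolding ipn_cov_def by (rule quad_form_add[OF minus_carrier_mat[OF X] smult_carrier_mat[OF S] v])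
  also have "quad_form (?Es - ?X) v = quad_form ?Es v - quad_form ?X v"
    by (rule quad_form_minus[OF msum_carrier_mat X v])
  also have "quad_form (?c \<cdot>\<^sub>m ?S) v = ?c * quad_form ?S v" by (rule quad_form_smult[OF S v])
  also have "quad_form ?Es v = (\<Sum>l\<in>{0..<K}. quad_form (EGFG P M N V H F k l) v)"
    using v E by (intro quad_form_msum) auto
  finally have q: "quad_form (ipn_cov P M N K V H F \<sigma>2 k) v
    = (\<Sum>l\<in>{0..<K}. quad_form (EGFG P M N V H F k l) v) - quad_form ?X v + ?c * quad_form ?S v" .
  have "quad_form (EGFG P M N V H F k k) v \<le> (\<Sum>l\<in>{0..<K}. quad_form (EGFG P M N V H F k l) v)"
    using k psdD[OF psd_EGFG E v] by (intro member_le_sum) auto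
  moreover have "quad_form ?X v \<le> quad_form (EGFG P M N V H F k k) v"
    using psdD[OF psd_EGFG_minus_outer_EG _ v] X unfolding EG_Fbar_eq[where F = F and k = k, OF F_dim[OF k]]
    by (simp add: quad_form_minus[OF E _ v])
  moreover have "0 \<le> ?c * quad_form ?S v"
    using \<sigma>2 psdD[OF psd_Smat S v] by (intro mult_nonneg_nonneg) (auto simp: less_eq_complex_def)
  ultimately show "0 \<le> quad_form (ipn_cov P M N K V H F \<sigma>2 k) v" unfolding q by simp
qed

lemma SE_le_bound:
  assumes \<sigma>2: "0 \<le> \<sigma>2" and \<tau>: "\<tau>p \<le> \<tau>c"
    and iC: "invertible_mat (ipn_cov P M N K V H F \<sigma>2 k)"
    and A: "A \<in> carrier_mat (M*N) N" and iA: "invertible_mat (Sigma P M N K V H F \<sigma>2 k A)"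
  shows "SE P M N K V H F \<sigma>2 \<tau>p \<tau>c k A \<le> (1 - real \<tau>p / real \<tau>c) * log 2 (Re (det (1\<^sub>m N
    + mat_adjoint (EG P M N V H k * F k) * minv (ipn_cov P M N K V H F \<sigma>2 k) * (EG P M N V H k * F k))))"
proof -
  have b: "EG P M N V H k * F k \<in> carrier_mat (M*N) N"
    using EG_carrier_mat F_dim[OF k] by (rule mult_carrier_mat)
  note gain = det_gain_bounds[OF ipn_cov_carrier_mat psd_ipn_cov[OF \<sigma>2] iC b A
      iA[unfolded Sigma_eq[where F = F and k = k, OF A F_dim[OF k]]]]
  have "0 \<le> 1 - real \<tau>p / real \<tau>c" using \<tau> by (cases "\<tau>c = 0") simp_all
  then show ?thesis
    unfolding SE_eq_det_gain[where F = F and k = k, OF A F_dim[OF k]]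
    using gain by (intro mult_left_mono) (auto simp: less_eq_complex_def)
qed

lemma SE_optimal_combiner:
  fixes \<sigma>2 :: real
  defines "b \<equiv> EG P M N V H k * F k" and "C \<equiv> ipn_cov P M N K V H F \<sigma>2 k"
  assumes \<sigma>2: "0 \<le> \<sigma>2" and iC: "invertible_mat C" and iB: "invertible_mat (C + b * mat_adjoint b)"
    and iS: "invertible_mat (Sigma P M N K V H F \<sigma>2 k (minv (C + b * mat_adjoint b) * b))"
  shows "SE P M N K V H F \<sigma>2 \<tau>p \<tau>c k (minv (C + b * mat_adjoint b) * b)
    = (1 - real \<tau>p / real \<tau>c) * log 2 (Re (det (1\<^sub>m N + mat_adjoint b * minv C * b)))"
proof -
  have C: "C \<in> carrier_mat (M*N) (M*N)" unfolding C_def by (rule ipn_cov_carrier_mat)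
  have b: "b \<in> carrier_mat (M*N) N" unfolding b_def using EG_carrier_mat F_dim[OF k] by (rule mult_carrier_mat)
  have B: "C + b * mat_adjoint b \<in> carrier_mat (M*N) (M*N)"
    using C mult_carrier_mat[OF b mat_adjoint_carrier_mat[OF b]] by simp
  have A0: "minv (C + b * mat_adjoint b) * b \<in> carrier_mat (M*N) N"
    using minv_inverse(1)[OF B iB] b by (rule mult_carrier_mat)
  show ?thesis
    unfolding SE_eq_det_gain[where F = F and k = k, OF A0 F_dim[OF k]] C_def[symmetric] b_def[symmetric]
    using det_gain_optimal[OF C psd_imp_hermitian[OF psd_ipn_cov[OF \<sigma>2, folded C_def] C] iC b iB
        iS[unfolded Sigma_eq[where F = F and k = k, OF A0 F_dim[OF k]], folded C_def]]
    by simp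
qed

end

theorem corollary2:
  fixes P :: "'w measure"
    and M L K N k \<tau>p \<tau>c :: nat
    and H V :: "nat \<Rightarrow> nat \<Rightarrow> 'w \<Rightarrow> complex mat"
    and F :: "nat \<Rightarrow> complex mat"
    and \<sigma>2 :: real
  defines "B \<equiv> msum (M*N) (M*N) (\<lambda>l. EGFG P M N V H F k l) {0..<K}
                + complex_of_real \<sigma>2 \<cdot>\<^sub>m Smat P M N V k"
  defines "Aopt \<equiv> minv B * EG P M N V H k * F k"
  defines "C \<equiv> msum (M*N) (M*N) (\<lambda>l. EGFG P M N V H F k l) {0..<K}
                - EG P M N V H k * Fbar F k * mat_adjoint (EG P M N V H k)
                + complex_of_real \<sigma>2 \<cdot>\<^sub>m Smat P M N V k"
  assumes P: "prob_space P"
    and pos: "0 < M" "0 < L" "0 < N"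
    and k: "k < K"
    and H_dim: "\<And>m l \<omega>. m < M \<Longrightarrow> l < K \<Longrightarrow> H m l \<omega> \<in> carrier_mat L N"
    and V_dim: "\<And>m l \<omega>. m < M \<Longrightarrow> l < K \<Longrightarrow> V m l \<omega> \<in> carrier_mat L N"
    and H_meas: "\<And>m l i j. m < M \<Longrightarrow> l < K \<Longrightarrow> i < L \<Longrightarrow> j < N \<Longrightarrow>
                   (\<lambda>\<omega>. H m l \<omega> $$ (i,j)) \<in> borel_measurable P"
    and V_meas: "\<And>m l i j. m < M \<Longrightarrow> l < K \<Longrightarrow> i < L \<Longrightarrow> j < N \<Longrightarrow>
                   (\<lambda>\<omega>. V m l \<omega> $$ (i,j)) \<in> borel_measurable P"
    and H_L2: "\<And>m l i j. m < M \<Longrightarrow> l < K \<Longrightarrow> i < L \<Longrightarrow> j < N \<Longrightarrow>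
                   integrable P (\<lambda>\<omega>. (cmod (H m l \<omega> $$ (i,j)))^2)"
    and V_L2: "\<And>m l i j. m < M \<Longrightarrow> l < K \<Longrightarrow> i < L \<Longrightarrow> j < N \<Longrightarrow>
                   integrable P (\<lambda>\<omega>. (cmod (V m l \<omega> $$ (i,j)))^2)"
    and GFG_int: "\<And>l i j. l < K \<Longrightarrow> i < M*N \<Longrightarrow> j < M*N \<Longrightarrow>
                   integrable P (\<lambda>\<omega>. (Gmat M N V H k l \<omega> * Fbar F l
                                       * mat_adjoint (Gmat M N V H k l \<omega>)) $$ (i,j))"
    and F_dim: "\<And>l. l < K \<Longrightarrow> F l \<in> carrier_mat N N"
    and \<sigma>2: "0 < \<sigma>2"
    and \<tau>: "0 < \<tau>p" "\<tau>p < \<tau>c"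
    and B_inv: "invertible_mat B"
    and C_inv: "invertible_mat C"
    and Aopt_adm: "invertible_mat (Sigma P M N K V H F \<sigma>2 k Aopt)"
  shows "(\<forall>A \<in> carrier_mat (M*N) N. invertible_mat (Sigma P M N K V H F \<sigma>2 k A) \<longrightarrow>
            SE P M N K V H F \<sigma>2 \<tau>p \<tau>c k A \<le> SE P M N K V H F \<sigma>2 \<tau>p \<tau>c k Aopt)
       \<and> SE P M N K V H F \<sigma>2 \<tau>p \<tau>c k Aopt =
           (1 - real \<tau>p / real \<tau>c) *
           log 2 (Re (det (1\<^sub>m N + mat_adjoint (F k) * mat_adjoint (EG P M N V H k)
                                * minv C * EG P M N V H k * F k)))"
proof -
  interpret cell_free_uplink P M L K N k H V F
    by (rule cell_free_uplink.intro) (fact P k H_dim V_dim H_meas V_meas H_L2 V_L2 GFG_int F_dim)+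
  define b where "b = EG P M N V H k * F k"
  have Fk: "F k \<in> carrier_mat N N" by (rule F_dim[OF k])
  have C_eq: "C = ipn_cov P M N K V H F \<sigma>2 k" unfolding C_def ipn_cov_def ..
  have B_eq: "B = C + b * mat_adjoint b"
    unfolding B_def C_eq b_def ipn_cov_plus_outer[where F = F and k = k, OF Fk] ..
  have B: "B \<in> carrier_mat (M*N) (M*N)"
    unfolding B_def by (rule add_carrier_mat[OF smult_carrier_mat[OF Smat_carrier_mat]])
  have "Aopt = minv B * b"
    unfolding Aopt_def b_def by (rule assoc_mult_mat[OF minv_inverse(1)[OF B B_inv] EG_carrier_mat Fk])
  then have Aopt_eq: "Aopt = minv (C + b * mat_adjoint b) * b" unfolding B_eq .
  have "mat_adjoint (F k) * mat_adjoint (EG P M N V H k) * minv C * EG P M N V H k * F k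
      = mat_adjoint b * minv C * b"
    unfolding b_def mat_adjoint_mult[OF EG_carrier_mat Fk]
    using minv_inverse(1)[OF ipn_cov_carrier_mat C_inv[unfolded C_eq]]
    by (simp add: assoc_mult_mat_dims carrier_matD[OF Fk] carrier_matD[OF EG_carrier_mat] carrier_matD C_eq)
  moreover have "SE P M N K V H F \<sigma>2 \<tau>p \<tau>c k Aopt
      = (1 - real \<tau>p / real \<tau>c) * log 2 (Re (det (1\<^sub>m N + mat_adjoint b * minv C * b)))"
    using \<sigma>2 C_inv B_inv Aopt_adm unfolding Aopt_eq B_eq C_eq b_def by (intro SE_optimal_combiner) simp_all
  ultimately show ?thesis
    using SE_le_bound[OF _ _ C_inv[unfolded C_eq]] \<sigma>2 \<tau> unfolding b_def C_eq by auto
qed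

end
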